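(* Consider the pulse-coupled network below and its synchronous periodic orbit $\phi_i(t)=\phi_0(t)$ for all $i$, which has period $T=\tau+1-\alpha$ with $\alpha=U^{-1}(U(\tau)+\varepsilon)$. Let $\boldsymbol\delta=(\delta_1,\dots,\delta_N)$ be a perturbation of the phases, applied at a time at which all units have fired and all pulses in transit have been received. Suppose $\max_i\delta_i-\min_i\delta_i<\tau$. For each $i$, let $j_1(i),\dots,j_{k_i}(i)$ be an enumeration of $\mathrm{Pre}(i)$ with $\delta_{j_1(i)}\ge\dots\ge\delta_{j_{k_i}(i)}$; this is the order in which $i$ receives the pulses. Then the perturbation $\boldsymbol\delta(T)$ after one period satisfies, to first order in $\boldsymbol\delta$, $$\delta_i(T)=p_{i,0}\,\delta_i+\sum_{n=1}^{k_i}(p_{i,n}-p_{i,n-1})\,\delta_{j_n(i)}+O(\|\boldsymbol\delta\|^2),$$ i.e. $\boldsymbol\delta(T)=A(\mathcal O)\boldsymbol\delta+O(\|\boldsymbol\delta\|^2)$, where $\mathcal O$ is the ordering just described. Thus the linearized dynamics is piecewise linear, with the operator depending on the rank order of $\boldsymbol\delta$.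
   Context: Let $U$ be a twice continuously differentiable function on an interval $I$ containing $[0,1]$ (and all points at which it is evaluated), with $U'>0$, $U''<0$, $U(0)=0$ and $U(1)=1$. For $\epsilon\in\mathbb R$ put $H_\epsilon(\phi)=U^{-1}(U(\phi)+\epsilon)$. The network consists of $N$ units with phases $\phi_i(t)$. For each $i$, $\mathrm{Pre}(i)\subseteq\{1,\dots,N\}\setminus\{i\}$ is nonempty with $k_i=|\mathrm{Pre}(i)|$. The couplings satisfy $\varepsilon_{ij}\ne0$ if and only if $j\in\mathrm{Pre}(i)$, and $\sum_j\varepsilon_{ij}=\varepsilon$ for all $i$, with $U(\tau)+\varepsilon<1$. The delay is $\tau\in(0,1)$, and all partial inputs are assumed subthreshold. Dynamics: - Between events, $d\phi_i/dt=1$. - When $\phi_j$ reaches $1$, it is reset to $0$ and a pulse is sent to every $i$ with $j\in\mathrm{Pre}(i)$. - That pulse arrives at time $t+\tau$ and sets $\phi_i\mapsto H_{\varepsilon_{ij}}(\phi_i)$ if $U(\phi_i)+\varepsilon_{ij}<1$, and $\phi_i\mapsto 0$ (with a pulse emitted) otherwise. Perturbations are $\delta_i=\phi_i(0)-\phi_0(0)$, and $\delta_i(T)$ is the corresponding phase difference after the stroboscopic time-$T$ map. For an enumeration $\mathcal O=(j_n(i))$ define $$p_{i,n}=\frac{U'\Big(U^{-1}\big(U(\tau)+\sum_{m=1}^{n}\varepsilon_{ij_m(i)}\big)\Big)}{U'\big(U^{-1}(U(\tau)+\varepsilon)\big)},\qquad n=0,\dots,k_i.$$ The stability matrix $A(\mathcal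 O)$ has entries - $A_{ii}=p_{i,0}$; - $A_{ij_n(i)}=p_{i,n}-p_{i,n-1}$; - all other entries are $0$. *)

theory Defs
  imports "HOL-Analysis.Analysis"
begin

text \<open>Pulse-coupled network with delay. Units are indexed by 1..N.
  Parameters: U (potential function), I (its domain interval), Pre (presynaptic sets),
  eps i j (coupling from j to i), tau (delay).\<close>

definition Hmap :: "(real \<Rightarrow> real) \<Rightarrow> real set \<Rightarrow> real \<Rightarrow> real \<Rightarrow> real" where
  "Hmap U I e phi = the_inv_into I U (U phi + e)"

record netstate =
  st_time :: real
  st_ph   :: "nat \<Rightarrow> real"
  st_pend :: "(real \<times> nat) list"   \<comment> \<open>pulses in transit: (arrival time, sending unit)\<close>

definition next_event :: "nat \<Rightarrow> netstate \<Rightarrow> real" where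
  "next_event N s =
     (let tf = st_time s + Min ((\<lambda>i. 1 - st_ph s i) ` {1..N})
      in if st_pend s = [] then tf else min tf (Min (fst ` set (st_pend s))))"

definition deliver ::
  "(real \<Rightarrow> real) \<Rightarrow> real set \<Rightarrow> nat \<Rightarrow> (nat \<Rightarrow> nat set) \<Rightarrow> (nat \<Rightarrow> nat \<Rightarrow> real) \<Rightarrow> real
   \<Rightarrow> real \<Rightarrow> nat \<Rightarrow> (nat \<Rightarrow> real) \<times> (real \<times> nat) list \<Rightarrow> (nat \<Rightarrow> real) \<times> (real \<times> nat) list" where
  "deliver U I N Pre eps tau te j acc =
     (let ph = fst acc; out = snd acc in
      ((\<lambda>i. if i \<in> {1..N} \<and> j \<in> Pre i then
               (if U (ph i) + eps i j < 1 then Hmap U I (eps i j) (ph i) else 0)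
             else ph i),
       out @ map (\<lambda>i. (te + tau, i))
               (sorted_list_of_set {i \<in> {1..N}. j \<in> Pre i \<and> \<not> (U (ph i) + eps i j < 1)})))"

definition net_step ::
  "(real \<Rightarrow> real) \<Rightarrow> real set \<Rightarrow> nat \<Rightarrow> (nat \<Rightarrow> nat set) \<Rightarrow> (nat \<Rightarrow> nat \<Rightarrow> real) \<Rightarrow> real
   \<Rightarrow> netstate \<Rightarrow> netstate" where
  "net_step U I N Pre eps tau s =
     (let te = next_event N s;
          ph1 = (\<lambda>i. st_ph s i + (te - st_time s));
          F = {i \<in> {1..N}. 1 \<le> ph1 i};
          ph2 = (\<lambda>i. if i \<in> F then 0 else ph1 i);
          fired = map (\<lambda>i. (te + tau, i)) (sorted_list_of_set F);
          arr = filter (\<lambda>p. fst p \<le> te) (st_pend s);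
          rest = filter (\<lambda>p. \<not> fst p \<le> te) (st_pend s);
          r = fold (\<lambda>p acc. deliver U I N Pre eps tau te (snd p) acc) arr (ph2, [])
      in \<lparr>st_time = te, st_ph = fst r, st_pend = rest @ fired @ snd r\<rparr>)"

definition phases_at ::
  "(real \<Rightarrow> real) \<Rightarrow> real set \<Rightarrow> nat \<Rightarrow> (nat \<Rightarrow> nat set) \<Rightarrow> (nat \<Rightarrow> nat \<Rightarrow> real) \<Rightarrow> real
   \<Rightarrow> netstate \<Rightarrow> real \<Rightarrow> nat \<Rightarrow> real" where
  "phases_at U I N Pre eps tau s Tend i =
     (let n = (LEAST n. Tend < next_event N ((net_step U I N Pre eps tau ^^ n) s));
          s' = (net_step U I N Pre eps tau ^^ n) s
      in st_ph s' i + (Tend - st_time s'))"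

definition init_state :: "real \<Rightarrow> (nat \<Rightarrow> real) \<Rightarrow> netstate" where
  "init_state theta delta = \<lparr>st_time = 0, st_ph = (\<lambda>i. theta + delta i), st_pend = []\<rparr>"

text \<open>The coefficients p_{i,n} for an enumeration Ord (Ord i n = j_n(i)).\<close>
definition pcoef ::
  "(real \<Rightarrow> real) \<Rightarrow> (real \<Rightarrow> real) \<Rightarrow> real set \<Rightarrow> (nat \<Rightarrow> nat \<Rightarrow> real) \<Rightarrow> real \<Rightarrow> real
   \<Rightarrow> (nat \<Rightarrow> nat \<Rightarrow> nat) \<Rightarrow> nat \<Rightarrow> nat \<Rightarrow> real" where
  "pcoef U U' I eps epsilon tau Ord i n =
     U' (the_inv_into I U (U tau + (\<Sum>m = 1..n. eps i (Ord i m))))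
     / U' (the_inv_into I U (U tau + epsilon))"

definition stabA ::
  "(real \<Rightarrow> real) \<Rightarrow> (real \<Rightarrow> real) \<Rightarrow> real set \<Rightarrow> (nat \<Rightarrow> nat set) \<Rightarrow> (nat \<Rightarrow> nat \<Rightarrow> real)
   \<Rightarrow> real \<Rightarrow> real \<Rightarrow> (nat \<Rightarrow> nat \<Rightarrow> nat) \<Rightarrow> nat \<Rightarrow> nat \<Rightarrow> real" where
  "stabA U U' I Pre eps epsilon tau Ord i l =
     (if l = i then pcoef U U' I eps epsilon tau Ord i 0
      else if (\<exists>n \<in> {1..card (Pre i)}. Ord i n = l) then
        (let n = (THE n. n \<in> {1..card (Pre i)} \<and> Ord i n = l) in
          pcoef U U' I eps epsilon tau Ord i n - pcoef U U' I eps epsilon tau Ord i (n - 1))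
      else 0)"

definition dnorm :: "nat \<Rightarrow> (nat \<Rightarrow> real) \<Rightarrow> real" where
  "dnorm N delta = Max ((\<lambda>i. \<bar>delta i\<bar>) ` {1..N})"

end

theory Submission
  imports Defs
begin

(* For a perturbation delta whose spread is below the delay tau, unit j fires at
   fire j = 1 - theta - delta j and its pulse reaches every postsynaptic unit i at fire j + tau.
   If the presynaptic units of i are enumerated as Ord i 1, ..., Ord i k with non-increasing
   delta, they arrive in exactly this order, and the phase of i just after its n-th arrival
   is given by a scalar recursion psi i n (pulses arriving simultaneously are harmless because
   the updates H_e add up: H_b o H_a = H_(a+b)). *)

lemma Hmap_spec:
  assumes inj: "inj_on U I" and x: "x \<in> I" and r: "U x + a \<in> U ` I"
  shows "Hmap U I a x \<in> I" "U (Hmap U I a x) = U x + a"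
  using r inj by (auto simp: Hmap_def the_inv_into_into f_the_inv_into_f)

lemma Hmap_add:
  assumes inj: "inj_on U I" and x: "x \<in> I" and r1: "U x + a \<in> U ` I" and r2: "U x + a + b \<in> U ` I"
  shows "Hmap U I b (Hmap U I a x) = Hmap U I (a + b) x"
  using Hmap_spec[OF inj x r1] by (simp add: Hmap_def add.assoc)

lemma deliver_subthreshold:
  assumes "\<And>i. i \<in> {1..N} \<Longrightarrow> j \<in> Pre i \<Longrightarrow> U (ph i) + eps i j < 1"
  shows "deliver U I N Pre eps tau te j (ph, out) =
    ((\<lambda>i. if i \<in> {1..N} \<and> j \<in> Pre i then Hmap U I (eps i j) (ph i) else ph i), out)"
proof -
  have "{i \<in> {1..N}. j \<in> Pre i \<and> \<not> U (ph i) + eps i j < 1} = {}" using assms by auto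
  then show ?thesis using assms unfolding deliver_def Let_def by (auto intro!: ext)
qed

abbreviation deliver_all ::
  "(real \<Rightarrow> real) \<Rightarrow> real set \<Rightarrow> nat \<Rightarrow> (nat \<Rightarrow> nat set) \<Rightarrow> (nat \<Rightarrow> nat \<Rightarrow> real) \<Rightarrow> real
   \<Rightarrow> real \<Rightarrow> (real \<times> nat) list \<Rightarrow> (nat \<Rightarrow> real) \<times> (real \<times> nat) list \<Rightarrow> (nat \<Rightarrow> real) \<times> (real \<times> nat) list" where
  "deliver_all U I N Pre eps tau te L acc \<equiv> fold (\<lambda>p acc. deliver U I N Pre eps tau te (snd p) acc) L acc"

abbreviation senders :: "(nat \<Rightarrow> nat set) \<Rightarrow> (real \<times> nat) list \<Rightarrow> nat \<Rightarrow> nat set" where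
  "senders Pre L i \<equiv> {j \<in> Pre i. j \<in> snd ` set L}"

text \<open>If every partial sum of the received couplings stays subthreshold, a batch of pulses from
  distinct senders emits no new pulses and moves each receiver by a single H-map with the summed
  coupling (by \<open>Hmap_add\<close>, the order of the batch is irrelevant).\<close>
lemma deliver_all_subthreshold:
  assumes inj: "inj_on U I" and dist: "distinct (map snd L)"
    and sub: "\<And>i S. i \<in> {1..N} \<Longrightarrow> senders Pre L i \<noteq> {} \<Longrightarrow> S \<subseteq> senders Pre L i \<Longrightarrow>
        ph i \<in> I \<and> U (ph i) + (\<Sum>j\<in>S. eps i j) \<in> U ` I \<and> U (ph i) + (\<Sum>j\<in>S. eps i j) < 1"
  shows "deliver_all U I N Pre eps tau te L (ph, out) =
    ((\<lambda>i. if i \<in> {1..N} \<and> senders Pre L i \<noteq> {}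
          then Hmap U I (\<Sum>j\<in>senders Pre L i. eps i j) (ph i) else ph i), out)"
  using dist sub
proof (induction L arbitrary: ph)
  case Nil
  then show ?case by simp
next
  case (Cons p L)
  define j where "j = snd p"
  have jL: "j \<notin> snd ` set L" using Cons.prems(1) j_def by auto
  have senders_Cons: "senders Pre (p # L) i = (if j \<in> Pre i then insert j (senders Pre L i) else senders Pre L i)"
    for i using j_def by auto
  have kick_j: "ph i \<in> I \<and> U (ph i) + eps i j \<in> U ` I \<and> U (ph i) + eps i j < 1"
    if "i \<in> {1..N}" "j \<in> Pre i" for i
  proof -
    have "senders Pre (p # L) i \<noteq> {}" "{j} \<subseteq> senders Pre (p # L) i"
      using that senders_Cons[of i] by auto
    from Cons.prems(2)[OF that(1) this] show ?thesis by simp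
  qed
  define ph' where "ph' = (\<lambda>i. if i \<in> {1..N} \<and> j \<in> Pre i then Hmap U I (eps i j) (ph i) else ph i)"
  have first: "deliver U I N Pre eps tau te j (ph, out) = (ph', out)"
    unfolding ph'_def by (rule deliver_subthreshold) (use kick_j in blast)
  have ph'_spec: "ph' i \<in> I \<and> U (ph' i) = U (ph i) + eps i j" if "i \<in> {1..N}" "j \<in> Pre i" for i
    using Hmap_spec[OF inj] kick_j[OF that] that unfolding ph'_def by simp
  have rest: "deliver_all U I N Pre eps tau te L (ph', out) =
    ((\<lambda>i. if i \<in> {1..N} \<and> senders Pre L i \<noteq> {}
          then Hmap U I (\<Sum>j\<in>senders Pre L i. eps i j) (ph' i) else ph' i), out)"
  proof (rule Cons.IH)
    show "distinct (map snd L)" using Cons.prems(1) by simp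
    fix i S assume i: "i \<in> {1..N}" and ne: "senders Pre L i \<noteq> {}" and S: "S \<subseteq> senders Pre L i"
    show "ph' i \<in> I \<and> U (ph' i) + (\<Sum>j\<in>S. eps i j) \<in> U ` I \<and> U (ph' i) + (\<Sum>j\<in>S. eps i j) < 1"
    proof (cases "j \<in> Pre i")
      case True
      have fin: "finite S" using S by (rule finite_subset) simp
      have "j \<notin> S" using S jL by auto
      then have "U (ph' i) + (\<Sum>j\<in>S. eps i j) = U (ph i) + (\<Sum>j\<in>insert j S. eps i j)"
        using ph'_spec[OF i True] fin by simp
      moreover have "insert j S \<subseteq> senders Pre (p # L) i" "senders Pre (p # L) i \<noteq> {}"
        using S True senders_Cons[of i] by auto
      ultimately show ?thesis using Cons.prems(2)[OF i] ph'_spec[OF i True] by metis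
    next
      case False
      have "senders Pre (p # L) i \<noteq> {}" "S \<subseteq> senders Pre (p # L) i" using S ne by auto
      from Cons.prems(2)[OF i this] show ?thesis using False by (simp add: ph'_def)
    qed
  qed
  have merged: "Hmap U I (\<Sum>j\<in>senders Pre L i. eps i j) (ph' i) = Hmap U I (\<Sum>j\<in>senders Pre (p # L) i. eps i j) (ph i)"
    if i: "i \<in> {1..N}" and jP: "j \<in> Pre i" and ne: "senders Pre L i \<noteq> {}" for i
  proof -
    have fin: "finite (senders Pre L i)" by simp
    have sum_eq: "(\<Sum>j\<in>senders Pre (p # L) i. eps i j) = eps i j + (\<Sum>j\<in>senders Pre L i. eps i j)"
      using senders_Cons[of i] jP jL fin by simp
    have "senders Pre (p # L) i \<noteq> {}" using jP senders_Cons[of i] by simp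
    from Cons.prems(2)[OF i this order_refl]
    have "U (ph i) + (\<Sum>j\<in>senders Pre (p # L) i. eps i j) \<in> U ` I" by simp
    then have "U (ph i) + eps i j + (\<Sum>j\<in>senders Pre L i. eps i j) \<in> U ` I"
      unfolding sum_eq by (simp add: add.assoc)
    then show ?thesis
      unfolding sum_eq ph'_def using Hmap_add[OF inj] kick_j[OF i jP] i jP by simp
  qed
  show ?case
  proof -
    have "deliver_all U I N Pre eps tau te (p # L) (ph, out) = deliver_all U I N Pre eps tau te L (ph', out)"
      using first j_def by simp
    also have "\<dots> = ((\<lambda>i. if i \<in> {1..N} \<and> senders Pre (p # L) i \<noteq> {}
          then Hmap U I (\<Sum>j\<in>senders Pre (p # L) i. eps i j) (ph i) else ph i), out)"
    proof (simp only: rest prod.inject, intro conjI refl ext)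
      fix i
      show "(if i \<in> {1..N} \<and> senders Pre L i \<noteq> {} then Hmap U I (\<Sum>j\<in>senders Pre L i. eps i j) (ph' i) else ph' i)
        = (if i \<in> {1..N} \<and> senders Pre (p # L) i \<noteq> {} then Hmap U I (\<Sum>j\<in>senders Pre (p # L) i. eps i j) (ph i) else ph i)"
      proof (cases "i \<in> {1..N} \<and> j \<in> Pre i")
        case True
        then show ?thesis using merged[of i] senders_Cons[of i]
          by (cases "senders Pre L i = {}") (simp_all add: ph'_def)
      next
        case False
        then show ?thesis using senders_Cons[of i] by (auto simp: ph'_def)
      qed
    qed
    finally show ?thesis .
  qed
qed

lemma downward_closed_eq_atLeastAtMost:
  fixes S :: "nat set"
  assumes "S \<subseteq> {1..k}" "\<And>n m. 1 \<le> n \<Longrightarrow> n \<le> m \<Longrightarrow> m \<in> S \<Longrightarrow> n \<in> S"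
  shows "S = {1..card S}"
proof (cases "S = {}")
  case True then show ?thesis by simp
next
  case False
  have fin: "finite S" using assms(1) finite_subset by blast
  define M where "M = Max S"
  have M: "M \<in> S" using Max_in[OF fin False] M_def by simp
  have "S = {1..M}"
  proof
    show "S \<subseteq> {1..M}" using assms(1) Max_ge[OF fin] M_def by fastforce
    show "{1..M} \<subseteq> S" using assms(2) M by auto
  qed
  then show ?thesis by simp
qed

text \<open>Unit \<open>j\<close> fires at \<open>fire j\<close>; the \<open>n\<close>-th pulse
  received by \<open>i\<close> (from \<open>Ord i n\<close>) arrives at \<open>arrival i n\<close> (with \<open>arrival i 0 = arrival i 1\<close>
  as a convenient convention).  \<open>psi i n\<close> is the phase of \<open>i\<close> just after its \<open>n\<close>-th arrival;
  \<open>traj\<close> is the resulting predicted phase at any time of the period and \<open>tracks s t\<close> says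
  that the simulated state \<open>s\<close> is exactly the predicted one at time \<open>t\<close>, including the pulses
  in transit.\<close>
locale period_schedule =
  fixes U :: "real \<Rightarrow> real" and I :: "real set" and N :: nat and Pre :: "nat \<Rightarrow> nat set"
    and eps :: "nat \<Rightarrow> nat \<Rightarrow> real" and tau theta Tend :: real and delta :: "nat \<Rightarrow> real"
    and Ord :: "nat \<Rightarrow> nat \<Rightarrow> nat"
begin

definition fire :: "nat \<Rightarrow> real" where "fire j = 1 - theta - delta j"
definition arrival :: "nat \<Rightarrow> nat \<Rightarrow> real" where "arrival i n = fire (Ord i (max 1 n)) + tau"
fun psi :: "nat \<Rightarrow> nat \<Rightarrow> real" where
  "psi i 0 = tau + delta i - delta (Ord i 1)"
| "psi i (Suc n) = Hmap U I (eps i (Ord i (Suc n))) (psi i n + arrival i (Suc n) - arrival i n)"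
definition received :: "nat \<Rightarrow> real \<Rightarrow> nat" where
  "received i t = card {n \<in> {1..card (Pre i)}. arrival i n \<le> t}"
definition traj :: "nat \<Rightarrow> real \<Rightarrow> real" where
  "traj i t = (if t < fire i then theta + delta i + t else psi i (received i t) + t - arrival i (received i t))"
definition events :: "real set" where "events = fire ` {1..N} \<union> (\<lambda>j. fire j + tau) ` {1..N}"
definition arriving :: "real \<Rightarrow> nat \<Rightarrow> nat set" where
  "arriving te i = {j \<in> Pre i. fire j + tau = te}"
definition last_arr :: real where "last_arr = Max ((\<lambda>j. fire j + tau) ` {1..N})"
definition tracks :: "netstate \<Rightarrow> real \<Rightarrow> bool" where
  "tracks s t \<longleftrightarrow> st_time s = t \<and> (\<forall>i\<in>{1..N}. st_ph s i = traj i t) \<and> distinct (st_pend s)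
     \<and> set (st_pend s) = (\<lambda>j. (fire j + tau, j)) ` {j\<in>{1..N}. fire j \<le> t \<and> t < fire j + tau}"

end

text \<open>Conditions under which the simulation follows the predicted schedule: \<open>Ord\<close> enumerates the
  presynaptic units in the order of arrival, the spread of \<open>delta\<close> is small, no unit reaches
  threshold a second time, every group of simultaneous kicks is subthreshold, and nothing happens
  between the last arrival and the end time \<open>Tend\<close>.\<close>
locale regular_schedule = period_schedule +
  assumes inj: "inj_on U I"
    and N1: "1 \<le> N"
    and Pre_sub: "\<And>i. i \<in> {1..N} \<Longrightarrow> Pre i \<subseteq> {1..N}"
    and Pre_ne: "\<And>i. i \<in> {1..N} \<Longrightarrow> Pre i \<noteq> {}"
    and Ord_bij: "\<And>i. i \<in> {1..N} \<Longrightarrow> bij_betw (Ord i) {1..card (Pre i)} (Pre i)"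
    and Ord_sorted: "\<And>i n m. i \<in> {1..N} \<Longrightarrow> 1 \<le> n \<Longrightarrow> n \<le> m \<Longrightarrow> m \<le> card (Pre i) \<Longrightarrow> delta (Ord i m) \<le> delta (Ord i n)"
    and spread_tau: "\<And>i j. i \<in> {1..N} \<Longrightarrow> j \<in> {1..N} \<Longrightarrow> delta i - delta j < tau"
    and spread_1_tau: "\<And>i j. i \<in> {1..N} \<Longrightarrow> j \<in> {1..N} \<Longrightarrow> delta i - delta j < 1 - tau"
    and below_threshold: "\<And>i. i \<in> {1..N} \<Longrightarrow> theta + delta i < 1"
    and no_refire: "\<And>i n j l. i \<in> {1..N} \<Longrightarrow> 1 \<le> n \<Longrightarrow> n \<le> card (Pre i) \<Longrightarrow> j \<in> {1..N} \<Longrightarrow> l \<in> {1..N}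
               \<Longrightarrow> psi i n + delta j - delta l < 1"
    and kicks_subthreshold: "\<And>i m. i \<in> {1..N} \<Longrightarrow> m < card (Pre i) \<Longrightarrow>
               psi i m + arrival i (Suc m) - arrival i m \<in> I \<and>
               (\<forall>S \<subseteq> Pre i - Ord i ` {1..m}.
                  U (psi i m + arrival i (Suc m) - arrival i m) + (\<Sum>j\<in>S. eps i j) \<in> U ` I \<and>
                  U (psi i m + arrival i (Suc m) - arrival i m) + (\<Sum>j\<in>S. eps i j) < 1)"
    and last_arr_before_end: "last_arr < Tend"
    and no_fire_before_end: "\<And>i. i \<in> {1..N} \<Longrightarrow> psi i (card (Pre i)) + Tend - arrival i (card (Pre i)) < 1"
begin

lemma tau_pos: "0 < tau" using spread_tau[of 1 1] N1 by auto

lemma finite_Pre: "i \<in> {1..N} \<Longrightarrow> finite (Pre i)"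
  using Pre_sub finite_subset by blast

lemma card_Pre_pos: "i \<in> {1..N} \<Longrightarrow> 1 \<le> card (Pre i)"
  using Pre_ne finite_Pre by (simp add: Suc_le_eq card_gt_0_iff)

lemma Ord_in: "i \<in> {1..N} \<Longrightarrow> n \<in> {1..card (Pre i)} \<Longrightarrow> Ord i n \<in> Pre i"
  using Ord_bij bij_betwE by blast

lemma Ord_in_units: "i \<in> {1..N} \<Longrightarrow> n \<in> {1..card (Pre i)} \<Longrightarrow> Ord i n \<in> {1..N}"
  using Ord_in Pre_sub by blast

lemma arrival_mono: "i \<in> {1..N} \<Longrightarrow> n \<le> m \<Longrightarrow> m \<le> card (Pre i) \<Longrightarrow> arrival i n \<le> arrival i m"
  using Ord_sorted[of i "max 1 n" "max 1 m"] card_Pre_pos[of i] by (auto simp: arrival_def fire_def max_def)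

text \<open>Because arrivals are sorted, the pulses received by time \<open>t\<close> are exactly the first
  \<open>received i t\<close> ones.\<close>
lemma received_iff:
  assumes i: "i \<in> {1..N}" and n: "n \<in> {1..card (Pre i)}"
  shows "arrival i n \<le> t \<longleftrightarrow> n \<le> received i t"
proof -
  let ?S = "{n \<in> {1..card (Pre i)}. arrival i n \<le> t}"
  have "?S = {1..card ?S}"
    by (rule downward_closed_eq_atLeastAtMost[of _ "card (Pre i)"]) (use arrival_mono[OF i] in fastforce)+
  then have "n \<in> ?S \<longleftrightarrow> n \<in> {1..received i t}" unfolding received_def by simp
  then show ?thesis using n by auto
qed

lemma received_le: "i \<in> {1..N} \<Longrightarrow> received i t \<le> card (Pre i)"
  unfolding received_def by (rule order_trans[OF card_mono[of "{1..card (Pre i)}"]]) auto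

lemma psi0_traj: "psi i 0 + t - arrival i 0 = t - fire i"
  by (simp add: arrival_def fire_def)

lemma last_arr_attained: "\<exists>l\<in>{1..N}. last_arr = fire l + tau"
  unfolding last_arr_def using Max_in[of "(\<lambda>j. fire j + tau) ` {1..N}"] N1 by fastforce

lemma last_arr_ge: "j \<in> {1..N} \<Longrightarrow> fire j + tau \<le> last_arr"
  unfolding last_arr_def by (rule Max_ge) auto

lemma last_arr_event: "last_arr \<in> events" using last_arr_attained events_def by auto

lemma finite_events: "finite events" unfolding events_def by simp

lemma fire_before_arrival: "i \<in> {1..N} \<Longrightarrow> j \<in> {1..N} \<Longrightarrow> fire i < fire j + tau"
  using spread_tau[of j i] by (simp add: fire_def)

text \<open>A unit that has fired cannot reach threshold again before the last arrival.\<close>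
lemma no_refire_before_last_arr:
  assumes i: "i \<in> {1..N}" and t: "fire i \<le> t" "t \<le> last_arr"
  shows "last_arr < t + (1 - traj i t)"
proof -
  obtain l where l: "l \<in> {1..N}" "last_arr = fire l + tau" using last_arr_attained by blast
  have tr: "traj i t = psi i (received i t) + t - arrival i (received i t)" using t by (simp add: traj_def)
  show ?thesis
  proof (cases "received i t = 0")
    case True
    then have "traj i t = t - fire i" using tr psi0_traj by simp
    then show ?thesis using spread_1_tau[OF i l(1)] l(2) by (simp add: fire_def)
  next
    case False
    let ?m = "received i t"
    have m: "1 \<le> ?m" "?m \<le> card (Pre i)" using False received_le[OF i] by auto
    have o: "Ord i ?m \<in> {1..N}" using Ord_in_units[OF i] m by auto
    have "psi i ?m + delta (Ord i ?m) - delta l < 1" using no_refire[OF i m o l(1)] .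
    moreover have "arrival i ?m = fire (Ord i ?m) + tau" using m by (simp add: arrival_def max_def)
    ultimately show ?thesis using tr l(2) by (simp add: fire_def)
  qed
qed

lemma Ord_inj: "i \<in> {1..N} \<Longrightarrow> inj_on (Ord i) {1..card (Pre i)}"
  using Ord_bij bij_betw_imp_inj_on by blast

lemma Ord_surj: "i \<in> {1..N} \<Longrightarrow> Ord i ` {1..card (Pre i)} = Pre i"
  using Ord_bij bij_betw_imp_surj_on by blast

lemma sum_Ord:
  assumes i: "i \<in> {1..N}" and A: "A \<subseteq> {1..card (Pre i)}"
  shows "(\<Sum>j\<in>Ord i ` A. eps i j) = (\<Sum>n\<in>A. eps i (Ord i n))"
  using sum.reindex[OF inj_on_subset[OF Ord_inj[OF i] A]] by simp

lemma Ord_img_sub: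
  assumes i: "i \<in> {1..N}" and A: "A \<subseteq> {Suc m..card (Pre i)}"
  shows "Ord i ` A \<subseteq> Pre i - Ord i ` {1..m}"
proof
  fix x assume "x \<in> Ord i ` A"
  then obtain n where n: "n \<in> A" "x = Ord i n" by auto
  have "x \<in> Pre i" using Ord_in[OF i] n A by auto
  moreover have "x \<notin> Ord i ` {1..m}"
  proof
    assume "x \<in> Ord i ` {1..m}"
    then obtain n' where n': "n' \<in> {1..m}" "x = Ord i n'" by auto
    have nA: "Suc m \<le> n" "n \<le> card (Pre i)" using n(1) A by auto
    have n'A: "1 \<le> n'" "n' \<le> m" using n'(1) by auto
    have "n = n'"
      by (rule inj_onD[OF Ord_inj[OF i]]) (use n n' nA n'A in auto)
    then show False using nA n'A by simp
  qed
  ultimately show "x \<in> Pre i - Ord i ` {1..m}" by simp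
qed

lemma psi_group:
  assumes i: "i \<in> {1..N}" and m: "m < card (Pre i)"
    and eqs: "\<And>n. Suc m \<le> n \<Longrightarrow> n \<le> Suc m + d \<Longrightarrow> n \<le> card (Pre i) \<and> arrival i n = arrival i (Suc m)"
  shows "psi i (Suc m + d) = Hmap U I (\<Sum>n\<in>{Suc m..Suc m + d}. eps i (Ord i n)) (psi i m + arrival i (Suc m) - arrival i m)"
  using eqs
proof (induction d)
  case 0
  show ?case by (simp only: add_0_right psi.simps atLeastAtMost_singleton) simp
next
  case (Suc d)
  let ?x = "psi i m + arrival i (Suc m) - arrival i m"
  let ?e = "\<lambda>n'. \<Sum>n\<in>{Suc m..n'}. eps i (Ord i n)"
  have kb: "Suc m + Suc d \<le> card (Pre i)" using Suc.prems[of "Suc m + Suc d"] by simp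
  have in_range: "U ?x + ?e n' \<in> U ` I" if "n' \<le> card (Pre i)" for n'
  proof -
    have "Ord i ` {Suc m..n'} \<subseteq> Pre i - Ord i ` {1..m}" by (rule Ord_img_sub[OF i]) (use that in auto)
    then have "U ?x + (\<Sum>j\<in>Ord i ` {Suc m..n'}. eps i j) \<in> U ` I"
      using kicks_subthreshold[OF i m] by blast
    moreover have "(\<Sum>j\<in>Ord i ` {Suc m..n'}. eps i j) = ?e n'" by (rule sum_Ord[OF i]) (use that in auto)
    ultimately show ?thesis by simp
  qed
  have s3: "?e (Suc m + Suc d) = ?e (Suc m + d) + eps i (Ord i (Suc (Suc m + d)))" by simp
  have r1: "U ?x + ?e (Suc m + d) \<in> U ` I" using in_range[of "Suc m + d"] kb by simp
  have r2: "U ?x + ?e (Suc m + d) + eps i (Ord i (Suc (Suc m + d))) \<in> U ` I"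
    using in_range[OF kb] unfolding s3 by (simp only: add.assoc)
  have IH: "psi i (Suc m + d) = Hmap U I (\<Sum>n\<in>{Suc m..Suc m + d}. eps i (Ord i n)) ?x"
  proof (rule Suc.IH)
    fix n assume "Suc m \<le> n" "n \<le> Suc m + d"
    then show "n \<le> card (Pre i) \<and> arrival i n = arrival i (Suc m)" using Suc.prems[of n] by simp
  qed
  have a1: "arrival i (Suc (Suc m + d)) = arrival i (Suc m)" using Suc.prems[of "Suc (Suc m + d)"] by simp
  have a2: "arrival i (Suc m + d) = arrival i (Suc m)" using Suc.prems[of "Suc m + d"] by simp
  have a: "arrival i (Suc (Suc m + d)) = arrival i (Suc m + d)"
    using a1 a2 by simp
  have "psi i (Suc m + Suc d) = Hmap U I (eps i (Ord i (Suc (Suc m + d)))) (psi i (Suc m + d))"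
    unfolding add_Suc_right psi.simps(2)[of i "Suc m + d"] a by simp
  also have "\<dots> = Hmap U I (\<Sum>n\<in>{Suc m..Suc m + Suc d}. eps i (Ord i n)) ?x"
    unfolding IH s3 using Hmap_add[OF inj _ r1 r2] kicks_subthreshold[OF i m] by simp
  finally show ?case .
qed

text \<open>Before a unit fires it has received no pulse, since every arrival is after every firing.\<close>
lemma received_at_own_firing: "i \<in> {1..N} \<Longrightarrow> received i (fire i) = 0"
  using fire_before_arrival Ord_in_units unfolding received_def
  by (force simp: arrival_def max_def not_le)

context
  fixes t te :: real
  assumes t_before_last: "t < last_arr" and te_event: "te \<in> events" and t_te: "t < te"
    and te_next: "\<And>e. e \<in> events \<Longrightarrow> t < e \<Longrightarrow> te \<le> e"
begin

lemma te_le_last_arr: "te \<le> last_arr"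
  using te_next[OF last_arr_event t_before_last] .

lemma no_fire_between: "l \<in> {1..N} \<Longrightarrow> t < fire l \<Longrightarrow> te \<le> fire l"
  using te_next by (auto simp: events_def)

lemma no_arrival_between: "l \<in> {1..N} \<Longrightarrow> t < fire l + tau \<Longrightarrow> te \<le> fire l + tau"
  using te_next by (auto simp: events_def)

lemma pulse_sent_before:
  assumes "l \<in> {1..N}" "fire l + tau = te"
  shows "fire l \<le> t"
proof (rule ccontr)
  assume "\<not> fire l \<le> t"
  then have "te \<le> fire l" using no_fire_between assms(1) by simp
  then show False using assms(2) tau_pos by simp
qed

text \<open>While the state tracks the prediction, the next event of the simulation is \<open>te\<close>: no unit
  reaches threshold and no pulse arrives earlier, and the predicted event does happen.\<close>
lemma next_event_eq:
  assumes tracks: "tracks s t"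
  shows "next_event N s = te"
proof -
  have time: "st_time s = t" and ph: "\<And>i. i \<in> {1..N} \<Longrightarrow> st_ph s i = traj i t"
    and pend: "set (st_pend s) = (\<lambda>j. (fire j + tau, j)) ` {j\<in>{1..N}. fire j \<le> t \<and> t < fire j + tau}"
    using tracks unfolding tracks_def by auto
  define A where "A = (\<lambda>i. 1 - st_ph s i) ` {1..N}"
  have finA: "finite A" "A \<noteq> {}" using N1 unfolding A_def by auto
  have Age: "te - t \<le> a" if aA: "a \<in> A" for a
  proof -
    obtain i where i: "i \<in> {1..N}" "a = 1 - st_ph s i" using aA unfolding A_def by blast
    show ?thesis
    proof (cases "t < fire i")
      case True
      then have "a = fire i - t" using i ph[OF i(1)] by (simp add: traj_def fire_def)
      then show ?thesis using no_fire_between[OF i(1) True] by simp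
    next
      case False
      then show ?thesis
        using no_refire_before_last_arr[OF i(1), of t] t_before_last te_le_last_arr i ph[OF i(1)] by simp
    qed
  qed
  have Pge: "te \<le> b" if "b \<in> fst ` set (st_pend s)" for b
    using that pend no_arrival_between by auto
  have ne: "next_event N s = (let tf = t + Min A in if st_pend s = [] then tf else min tf (Min (fst ` set (st_pend s))))"
    unfolding next_event_def A_def time ..
  have ge: "te \<le> next_event N s"
  proof -
    have "te - t \<le> Min A" using Age finA by simp
    moreover have "st_pend s \<noteq> [] \<Longrightarrow> te \<le> Min (fst ` set (st_pend s))"
      using Pge by (simp add: Min_ge_iff)
    ultimately show ?thesis unfolding ne Let_def by auto
  qed
  have le: "next_event N s \<le> te"
  proof -
    from te_event obtain j where j: "j \<in> {1..N}" "te = fire j \<or> te = fire j + tau" unfolding events_def by auto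
    show ?thesis
    proof (cases "te = fire j")
      case True
      have "1 - st_ph s j \<in> A" using j A_def by auto
      then have "Min A \<le> 1 - st_ph s j" using finA by simp
      moreover have "st_ph s j = theta + delta j + t" using ph[OF j(1)] True t_te by (simp add: traj_def)
      ultimately have "t + Min A \<le> te" using True by (simp add: fire_def)
      then show ?thesis unfolding ne Let_def by auto
    next
      case False
      then have te2: "te = fire j + tau" using j by auto
      then have "(te, j) \<in> set (st_pend s)" using pend pulse_sent_before[OF j(1)] t_te j(1) by auto
      then have "st_pend s \<noteq> []" and "Min (fst ` set (st_pend s)) \<le> te"
        by (auto intro!: Min_le simp: rev_image_eqI)
      then show ?thesis unfolding ne Let_def by auto
    qed
  qed
  show ?thesis using ge le by simp
qed

lemma reaches_threshold_iff:
  assumes i: "i \<in> {1..N}"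
  shows "1 \<le> traj i t + (te - t) \<longleftrightarrow> fire i = te"
proof (cases "t < fire i")
  case True
  then have "traj i t + (te - t) = theta + delta i + te" by (simp add: traj_def)
  then show ?thesis using no_fire_between[OF i True] by (auto simp: fire_def)
next
  case False
  have "traj i t + (te - t) < 1"
    using no_refire_before_last_arr[OF i, of t] False t_before_last te_le_last_arr by simp
  then show ?thesis using False t_te by auto
qed

lemma arrival_block:
  assumes i: "i \<in> {1..N}" and ne: "arriving te i \<noteq> {}"
  shows "fire i \<le> t" and "received i t < received i te"
    and "arriving te i = Ord i ` {Suc (received i t)..received i te}"
    and "\<And>n. Suc (received i t) \<le> n \<Longrightarrow> n \<le> received i te \<Longrightarrow> n \<le> card (Pre i) \<and> arrival i n = te"
proof -
  let ?m = "received i t" and ?m' = "received i te"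
  obtain j where j: "j \<in> Pre i" "fire j + tau = te" using ne by (auto simp: arriving_def)
  have jN: "j \<in> {1..N}" using Pre_sub[OF i] j(1) by auto
  show "fire i \<le> t"
  proof (rule ccontr)
    assume "\<not> fire i \<le> t"
    then have "te \<le> fire i" using no_fire_between[OF i] by simp
    then show False using fire_before_arrival[OF i jN] j(2) by simp
  qed
  obtain n where n: "n \<in> {1..card (Pre i)}" "Ord i n = j" using Ord_surj[OF i] j(1) by force
  have an: "arrival i n = te" using n j(2) by (simp add: arrival_def max_def)
  have nm: "\<not> n \<le> ?m" using received_iff[OF i n(1), of t] an t_te by simp
  have sm: "Suc ?m \<in> {1..card (Pre i)}" using nm n by simp
  have "arrival i (Suc ?m) \<le> te" using arrival_mono[OF i, of "Suc ?m" n] nm n an by simp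
  moreover have "t < arrival i (Suc ?m)" using received_iff[OF i sm, of t] by simp
  moreover have "arrival i (Suc ?m) = fire (Ord i (Suc ?m)) + tau" by (simp add: arrival_def)
  ultimately have first: "arrival i (Suc ?m) = te"
    using no_arrival_between[OF Ord_in_units[OF i sm]] by simp
  show "?m < ?m'" using received_iff[OF i sm, of te] first by simp
  show block: "n' \<le> card (Pre i) \<and> arrival i n' = te" if "Suc ?m \<le> n'" "n' \<le> ?m'" for n'
  proof -
    have nk: "n' \<le> card (Pre i)" using that received_le[OF i, of te] by simp
    have "arrival i n' \<le> te" using received_iff[OF i, of n' te] that nk by simp
    moreover have "arrival i (Suc ?m) \<le> arrival i n'" using arrival_mono[OF i] that nk by simp
    ultimately show ?thesis using nk first by simp
  qed
  show "arriving te i = Ord i ` {Suc ?m..?m'}"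
  proof
    show "arriving te i \<subseteq> Ord i ` {Suc ?m..?m'}"
    proof
      fix x assume "x \<in> arriving te i"
      then have x: "x \<in> Pre i" "fire x + tau = te" by (auto simp: arriving_def)
      obtain n' where n': "n' \<in> {1..card (Pre i)}" "Ord i n' = x" using Ord_surj[OF i] x(1) by force
      have an': "arrival i n' = te" using n' x(2) by (simp add: arrival_def max_def)
      have "\<not> n' \<le> ?m" using received_iff[OF i n'(1), of t] an' t_te by simp
      moreover have "n' \<le> ?m'" using received_iff[OF i n'(1), of te] an' by simp
      ultimately show "x \<in> Ord i ` {Suc ?m..?m'}" using n' by force
    qed
    show "Ord i ` {Suc ?m..?m'} \<subseteq> arriving te i"
    proof
      fix x assume "x \<in> Ord i ` {Suc ?m..?m'}"
      then obtain n' where n': "n' \<in> {Suc ?m..?m'}" "x = Ord i n'" by auto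
      have nk: "n' \<in> {1..card (Pre i)}" using n' block by auto
      have "arrival i n' = te" using block n' by auto
      then show "x \<in> arriving te i"
        using Ord_in[OF i nk] n' nk by (simp add: arriving_def arrival_def max_def)
    qed
  qed
qed

lemma arrival_block_subthreshold:
  assumes i: "i \<in> {1..N}" and ne: "arriving te i \<noteq> {}" and S: "S \<subseteq> arriving te i"
  shows "traj i t + (te - t) \<in> I \<and> U (traj i t + (te - t)) + (\<Sum>j\<in>S. eps i j) \<in> U ` I
    \<and> U (traj i t + (te - t)) + (\<Sum>j\<in>S. eps i j) < 1"
proof -
  let ?m = "received i t"
  note block = arrival_block[OF i ne]
  have mk: "?m < card (Pre i)" using block(2) received_le[OF i, of te] by simp
  have "arrival i (Suc ?m) = te" using block(2,4) by simp
  then have "traj i t + (te - t) = psi i ?m + arrival i (Suc ?m) - arrival i ?m"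
    using block(1) by (simp add: traj_def)
  moreover have "arriving te i \<subseteq> Pre i - Ord i ` {1..?m}"
    using block(3) Ord_img_sub[OF i, of "{Suc ?m..received i te}" ?m] received_le[OF i, of te] by auto
  ultimately show ?thesis using kicks_subthreshold[OF i mk] S by auto
qed

lemma received_unchanged:
  assumes i: "i \<in> {1..N}" and none: "arriving te i = {}"
  shows "received i te = received i t"
proof -
  have "arrival i n \<le> t" if n: "n \<in> {1..card (Pre i)}" "arrival i n \<le> te" for n
  proof (rule ccontr)
    assume "\<not> arrival i n \<le> t"
    moreover have "arrival i n = fire (Ord i n) + tau" using n by (simp add: arrival_def max_def)
    ultimately have "arrival i n = te"
      using no_arrival_between[OF Ord_in_units[OF i n(1)]] n(2) by simp
    then have "Ord i n \<in> arriving te i"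
      using Ord_in[OF i n(1)] n(1) by (simp add: arriving_def arrival_def max_def)
    then show False using none by simp
  qed
  then have "{n \<in> {1..card (Pre i)}. arrival i n \<le> te} = {n \<in> {1..card (Pre i)}. arrival i n \<le> t}"
    using t_te by force
  then show ?thesis by (simp add: received_def)
qed

lemma traj_at_next_event:
  assumes i: "i \<in> {1..N}"
  shows "traj i te = (if arriving te i = {} then (if fire i = te then 0 else traj i t + (te - t))
          else Hmap U I (\<Sum>j\<in>arriving te i. eps i j) (traj i t + (te - t)))"
proof (cases "arriving te i = {}")
  case True
  consider "te < fire i" | "fire i = te" | "fire i \<le> t" using no_fire_between[OF i] by fastforce
  then show ?thesis
  proof cases
    case 1
    then show ?thesis using True t_te by (simp add: traj_def)
  next
    case 2
    then show ?thesis using True received_at_own_firing[OF i] psi0_traj[of i te] by (simp add: traj_def)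
  next
    case 3
    then show ?thesis using True received_unchanged[OF i True] t_te by (simp add: traj_def)
  qed
next
  case False
  note block = arrival_block[OF i False]
  let ?m = "received i t" and ?m' = "received i te"
  have mk: "?m < card (Pre i)" using block(2) received_le[OF i, of te] by simp
  define d where "d = ?m' - Suc ?m"
  have m'_eq: "Suc ?m + d = ?m'" using block(2) by (simp add: d_def)
  have sum_eq: "(\<Sum>j\<in>arriving te i. eps i j) = (\<Sum>n\<in>{Suc ?m..Suc ?m + d}. eps i (Ord i n))"
    unfolding m'_eq block(3) using sum_Ord[OF i, of "{Suc ?m..?m'}"] received_le[OF i, of te] by auto
  have "psi i ?m' = Hmap U I (\<Sum>n\<in>{Suc ?m..Suc ?m + d}. eps i (Ord i n)) (psi i ?m + arrival i (Suc ?m) - arrival i ?m)"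
    unfolding m'_eq[symmetric] by (rule psi_group[OF i mk]) (use block(4) m'_eq in auto)
  moreover have "arrival i (Suc ?m) = te" "arrival i ?m' = te" using block(2,4) by auto
  ultimately show ?thesis using False sum_eq block(1) t_te by (simp add: traj_def add_diff_eq)
qed

lemma arrivals_in_transit:
  assumes tracks: "tracks s t"
  shows "set (filter (\<lambda>p. fst p \<le> te) (st_pend s)) = (\<lambda>j. (fire j + tau, j)) ` {j\<in>{1..N}. fire j + tau = te}"
    and "set (filter (\<lambda>p. \<not> fst p \<le> te) (st_pend s))
      = (\<lambda>j. (fire j + tau, j)) ` {j\<in>{1..N}. fire j \<le> t \<and> te < fire j + tau}"
    and "distinct (map snd (filter (\<lambda>p. fst p \<le> te) (st_pend s)))"
proof -
  have pend: "set (st_pend s) = (\<lambda>j. (fire j + tau, j)) ` {j\<in>{1..N}. fire j \<le> t \<and> t < fire j + tau}"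
    and dist: "distinct (st_pend s)"
    using tracks unfolding tracks_def by auto
  show "set (filter (\<lambda>p. fst p \<le> te) (st_pend s)) = (\<lambda>j. (fire j + tau, j)) ` {j\<in>{1..N}. fire j + tau = te}"
    using pend no_arrival_between pulse_sent_before t_te by (force simp: image_iff)
  show "set (filter (\<lambda>p. \<not> fst p \<le> te) (st_pend s))
      = (\<lambda>j. (fire j + tau, j)) ` {j\<in>{1..N}. fire j \<le> t \<and> te < fire j + tau}"
    using pend no_arrival_between t_te by (force simp: image_iff)
  have "inj_on snd (set (st_pend s))" unfolding pend by (auto simp: inj_on_def)
  then show "distinct (map snd (filter (\<lambda>p. fst p \<le> te) (st_pend s)))"
    unfolding distinct_map using dist by (auto intro: inj_on_subset)
qed

lemma deliver_at_next_event:
  assumes tracks: "tracks s t"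
    and ph2: "\<And>i. i \<in> {1..N} \<Longrightarrow> ph2 i = (if fire i = te then 0 else traj i t + (te - t))"
  shows "deliver_all U I N Pre eps tau te (filter (\<lambda>p. fst p \<le> te) (st_pend s)) (ph2, [])
    = ((\<lambda>i. if i \<in> {1..N} \<and> arriving te i \<noteq> {} then Hmap U I (\<Sum>j\<in>arriving te i. eps i j) (ph2 i) else ph2 i), [])"
    (is "deliver_all U I N Pre eps tau te ?arl (ph2, []) = _")
proof -
  note arl = arrivals_in_transit[OF tracks]
  have senders_eq: "senders Pre ?arl i = arriving te i" if "i \<in> {1..N}" for i
    unfolding arl(1) arriving_def using Pre_sub[OF that] by (auto simp: image_iff)
  have "deliver_all U I N Pre eps tau te ?arl (ph2, []) = ((\<lambda>i. if i \<in> {1..N} \<and> senders Pre ?arl i \<noteq> {}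
    then Hmap U I (\<Sum>j\<in>senders Pre ?arl i. eps i j) (ph2 i) else ph2 i), [])"
  proof (rule deliver_all_subthreshold[OF inj arl(3)])
    fix i S assume i: "i \<in> {1..N}" and "senders Pre ?arl i \<noteq> {}" "S \<subseteq> senders Pre ?arl i"
    then have ne: "arriving te i \<noteq> {}" and S: "S \<subseteq> arriving te i" using senders_eq by auto
    have "fire i \<noteq> te" using arrival_block(1)[OF i ne] t_te by simp
    then show "ph2 i \<in> I \<and> U (ph2 i) + (\<Sum>j\<in>S. eps i j) \<in> U ` I \<and> U (ph2 i) + (\<Sum>j\<in>S. eps i j) < 1"
      using arrival_block_subthreshold[OF i ne S] ph2[OF i] by simp
  qed
  also have "\<dots> = ((\<lambda>i. if i \<in> {1..N} \<and> arriving te i \<noteq> {}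
    then Hmap U I (\<Sum>j\<in>arriving te i. eps i j) (ph2 i) else ph2 i), [])"
  proof (simp only: prod.inject, intro conjI refl ext)
    fix i
    show "(if i \<in> {1..N} \<and> senders Pre ?arl i \<noteq> {} then Hmap U I (\<Sum>j\<in>senders Pre ?arl i. eps i j) (ph2 i) else ph2 i)
      = (if i \<in> {1..N} \<and> arriving te i \<noteq> {} then Hmap U I (\<Sum>j\<in>arriving te i. eps i j) (ph2 i) else ph2 i)"
    proof (cases "i \<in> {1..N}")
      case True
      then show ?thesis by (simp only: senders_eq[OF True])
    next
      case False
      then show ?thesis by (simp only: simp_thms if_False)
    qed
  qed
  finally show ?thesis .
qed

lemma step:
  assumes tracks: "tracks s t"
  shows "tracks (net_step U I N Pre eps tau s) te"
proof -
  have time: "st_time s = t" and ph: "\<And>i. i \<in> {1..N} \<Longrightarrow> st_ph s i = traj i t"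
    and dist: "distinct (st_pend s)"
    using tracks unfolding tracks_def by auto
  define ph1 where "ph1 = (\<lambda>i. st_ph s i + (te - st_time s))"
  define F where "F = {i \<in> {1..N}. 1 \<le> ph1 i}"
  define ph2 where "ph2 = (\<lambda>i. if i \<in> F then 0 else ph1 i)"
  define fired where "fired = map (\<lambda>i. (te + tau, i)) (sorted_list_of_set F)"
  define arl where "arl = filter (\<lambda>p. fst p \<le> te) (st_pend s)"
  define rest where "rest = filter (\<lambda>p. \<not> fst p \<le> te) (st_pend s)"
  define r where "r = deliver_all U I N Pre eps tau te arl (ph2, [])"
  have ns: "net_step U I N Pre eps tau s = \<lparr>st_time = te, st_ph = fst r, st_pend = rest @ fired @ snd r\<rparr>"
    unfolding net_step_def Let_def next_event_eq[OF tracks]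
    by (simp only: ph1_def F_def ph2_def fired_def arl_def rest_def r_def)
  have ph1_eq: "ph1 i = traj i t + (te - t)" if "i \<in> {1..N}" for i
    using ph[OF that] time by (simp add: ph1_def)
  have F_eq: "F = {i \<in> {1..N}. fire i = te}"
    using reaches_threshold_iff ph1_eq unfolding F_def by auto
  have ph2_eq: "ph2 i = (if fire i = te then 0 else traj i t + (te - t))" if "i \<in> {1..N}" for i
    using that F_eq ph1_eq[OF that] by (simp add: ph2_def)
  have r_eq: "r = ((\<lambda>i. if i \<in> {1..N} \<and> arriving te i \<noteq> {}
      then Hmap U I (\<Sum>j\<in>arriving te i. eps i j) (ph2 i) else ph2 i), [])"
    unfolding r_def arl_def using deliver_at_next_event[OF tracks ph2_eq] .
  have phases: "fst r i = traj i te" if i: "i \<in> {1..N}" for i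
  proof (cases "arriving te i = {}")
    case True
    then show ?thesis using r_eq traj_at_next_event[OF i] ph2_eq[OF i] by simp
  next
    case False
    have "fire i \<noteq> te" using arrival_block(1)[OF i False] t_te by simp
    then show ?thesis using False i r_eq traj_at_next_event[OF i] ph2_eq[OF i] by simp
  qed
  have rest_set: "set rest = (\<lambda>j. (fire j + tau, j)) ` {j\<in>{1..N}. fire j \<le> t \<and> te < fire j + tau}"
    unfolding rest_def using arrivals_in_transit(2)[OF tracks] .
  have fired_set: "set fired = (\<lambda>j. (fire j + tau, j)) ` {j\<in>{1..N}. fire j = te}"
    unfolding fired_def using F_eq by (simp add: F_def)
  have "{j\<in>{1..N}. fire j \<le> te \<and> te < fire j + tau}
      = {j\<in>{1..N}. fire j \<le> t \<and> te < fire j + tau} \<union> {j\<in>{1..N}. fire j = te}"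
    using no_fire_between t_te tau_pos by force
  then have newpend: "set (rest @ fired @ snd r) = (\<lambda>j. (fire j + tau, j)) ` {j\<in>{1..N}. fire j \<le> te \<and> te < fire j + tau}"
    using rest_set fired_set r_eq by auto
  have newdist: "distinct (rest @ fired @ snd r)"
  proof -
    have "distinct rest" unfolding rest_def using dist by simp
    moreover have "distinct fired" unfolding fired_def by (simp add: distinct_map inj_on_def)
    moreover have "set rest \<inter> set fired = {}" using rest_set fired_set t_te by auto
    ultimately show ?thesis using r_eq by simp
  qed
  show ?thesis unfolding tracks_def ns using phases newpend newdist by simp
qed

end

lemma init_tracks: "tracks (init_state theta delta) 0"
proof -
  have h: "delta i < 1 - theta" if "1 \<le> i" "i \<le> N" for i using below_threshold[of i] that by simp
  then show ?thesis unfolding tracks_def init_state_def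
    by (auto simp: traj_def fire_def) (meson h not_less)+
qed

lemma next_event_time_exists:
  assumes "t < last_arr"
  shows "\<exists>te. te \<in> events \<and> t < te \<and> (\<forall>e\<in>events. t < e \<longrightarrow> te \<le> e)"
proof -
  let ?A = "{e \<in> events. t < e}"
  have fin: "finite ?A" using finite_events by simp
  have ne: "?A \<noteq> {}" using last_arr_event assms by auto
  show ?thesis using Min_in[OF fin ne] Min_le[OF fin] by (intro exI[of _ "Min ?A"]) auto
qed

lemma tracks_until_last_arr:
  "tracks s t \<Longrightarrow> t \<le> last_arr \<Longrightarrow> \<exists>n0. tracks ((net_step U I N Pre eps tau ^^ n0) s) last_arr
     \<and> (\<forall>n<n0. \<exists>t'. tracks ((net_step U I N Pre eps tau ^^ n) s) t' \<and> t' < last_arr)"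
proof (induction "card {e \<in> events. t < e}" arbitrary: s t rule: less_induct)
  case less
  show ?case
  proof (cases "t = last_arr")
    case True
    then show ?thesis using less.prems by (intro exI[of _ 0]) auto
  next
    case False
    then have t: "t < last_arr" using less.prems by simp
    obtain te where te: "te \<in> events" "t < te" "\<And>e. e \<in> events \<Longrightarrow> t < e \<Longrightarrow> te \<le> e"
      using next_event_time_exists[OF t] by blast
    have tracks': "tracks (net_step U I N Pre eps tau s) te" using step[OF t te less.prems(1)] .
    have tele: "te \<le> last_arr" using te(3)[OF last_arr_event t] .
    have lt: "card {e \<in> events. te < e} < card {e \<in> events. t < e}"
    proof (rule psubset_card_mono)
      show "finite {e \<in> events. t < e}" using finite_events by simp
      show "{e \<in> events. te < e} \<subset> {e \<in> events. t < e}" using te by auto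
    qed
    obtain n0 where n0: "tracks ((net_step U I N Pre eps tau ^^ n0) (net_step U I N Pre eps tau s)) last_arr"
      "\<forall>n<n0. \<exists>t'. tracks ((net_step U I N Pre eps tau ^^ n) (net_step U I N Pre eps tau s)) t' \<and> t' < last_arr"
      using less.hyps[OF lt tracks' tele] by blast
    show ?thesis
    proof (intro exI[of _ "Suc n0"] conjI allI impI)
      show "tracks ((net_step U I N Pre eps tau ^^ Suc n0) s) last_arr" using n0(1) by (simp only: funpow_Suc_right comp_apply)
      fix n assume n: "n < Suc n0"
      show "\<exists>t'. tracks ((net_step U I N Pre eps tau ^^ n) s) t' \<and> t' < last_arr"
      proof (cases n)
        case 0 then show ?thesis using less.prems(1) t by auto
      next
        case (Suc n')
        have "n' < n0" using n Suc by simp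
        then show ?thesis using n0(2) unfolding Suc by (simp only: funpow_Suc_right comp_apply)
      qed
    qed
  qed
qed

lemma tracks_at_last_arr:
  assumes tracks: "tracks s last_arr"
  shows "Tend < next_event N s"
    "\<And>i. i \<in> {1..N} \<Longrightarrow> st_ph s i + (Tend - st_time s) = psi i (card (Pre i)) + Tend - arrival i (card (Pre i))"
proof -
  have time: "st_time s = last_arr" and ph: "\<And>i. i \<in> {1..N} \<Longrightarrow> st_ph s i = traj i last_arr"
    and pend: "set (st_pend s) = (\<lambda>j. (fire j + tau, j)) ` {j\<in>{1..N}. fire j \<le> last_arr \<and> last_arr < fire j + tau}"
    using tracks unfolding tracks_def by auto
  have "{j\<in>{1..N}. fire j \<le> last_arr \<and> last_arr < fire j + tau} = {}"
  proof -
    { fix j assume j: "j \<in> {1..N}" "last_arr < fire j + tau"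
      have False using last_arr_ge[OF j(1)] j(2) by simp }
    then show ?thesis by blast
  qed
  then have "set (st_pend s) = {}" unfolding pend by (simp only: image_empty)
  then have pe: "st_pend s = []" by simp
  have tr: "traj i last_arr = psi i (card (Pre i)) + last_arr - arrival i (card (Pre i))" if i: "i \<in> {1..N}" for i
  proof -
    have fi: "\<not> last_arr < fire i" using last_arr_ge[OF i] tau_pos by simp
    have "arrival i n \<le> last_arr" if n: "n \<in> {1..card (Pre i)}" for n
      using last_arr_ge[OF Ord_in_units[OF i n]] n by (simp add: arrival_def max_def)
    then have "{n \<in> {1..card (Pre i)}. arrival i n \<le> last_arr} = {1..card (Pre i)}"
      by blast
    then have "received i last_arr = card (Pre i)" by (simp add: received_def)
    then show ?thesis using fi by (simp add: traj_def)
  qed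
  show "\<And>i. i \<in> {1..N} \<Longrightarrow> st_ph s i + (Tend - st_time s) = psi i (card (Pre i)) + Tend - arrival i (card (Pre i))"
    using ph tr time by simp
  define A where "A = (\<lambda>i. 1 - st_ph s i) ` {1..N}"
  have finA: "finite A" "A \<noteq> {}" using N1 unfolding A_def by auto
  have "Tend - last_arr < Min A"
  proof (subst Min_gr_iff[OF finA], intro ballI)
    fix a assume "a \<in> A"
    then obtain i where i: "i \<in> {1..N}" "a = 1 - st_ph s i" unfolding A_def by blast
    show "Tend - last_arr < a" using i ph[OF i(1)] tr[OF i(1)] no_fire_before_end[OF i(1)] by simp
  qed
  then show "Tend < next_event N s" unfolding next_event_def Let_def pe time A_def by simp
qed

lemma phases_at_end:
  assumes i: "i \<in> {1..N}"
  shows "phases_at U I N Pre eps tau (init_state theta delta) Tend i = psi i (card (Pre i)) + Tend - arrival i (card (Pre i))"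
proof -
  have a0: "0 \<le> last_arr" using last_arr_attained below_threshold tau_pos by (force simp: fire_def)
  obtain n0 where n0: "tracks ((net_step U I N Pre eps tau ^^ n0) (init_state theta delta)) last_arr"
      "\<forall>n<n0. \<exists>t'. tracks ((net_step U I N Pre eps tau ^^ n) (init_state theta delta)) t' \<and> t' < last_arr"
    using tracks_until_last_arr[OF init_tracks a0] by blast
  have L: "(LEAST n. Tend < next_event N ((net_step U I N Pre eps tau ^^ n) (init_state theta delta))) = n0"
  proof (rule Least_equality)
    show "Tend < next_event N ((net_step U I N Pre eps tau ^^ n0) (init_state theta delta))"
      using tracks_at_last_arr(1)[OF n0(1)] .
    fix n assume n: "Tend < next_event N ((net_step U I N Pre eps tau ^^ n) (init_state theta delta))"
    show "n0 \<le> n"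
    proof (rule ccontr)
      assume "\<not> n0 \<le> n"
      then have "n < n0" by simp
      then have "\<exists>t'. tracks ((net_step U I N Pre eps tau ^^ n) (init_state theta delta)) t' \<and> t' < last_arr"
        using n0(2) by blast
      then obtain t' where t': "tracks ((net_step U I N Pre eps tau ^^ n) (init_state theta delta)) t'" "t' < last_arr"
        by blast
      obtain te where te: "te \<in> events" "t' < te" "\<And>e. e \<in> events \<Longrightarrow> t' < e \<Longrightarrow> te \<le> e"
        using next_event_time_exists[OF t'(2)] by blast
      have "next_event N ((net_step U I N Pre eps tau ^^ n) (init_state theta delta)) = te"
        using next_event_eq[OF t'(2) te t'(1)] .
      moreover have "te \<le> last_arr" using te(3)[OF last_arr_event t'(2)] .
      ultimately show False using n last_arr_before_end by simp
    qed
  qed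
  show ?thesis unfolding phases_at_def Let_def L using tracks_at_last_arr(2)[OF n0(1) i] by simp
qed

end

lemma strict_mono_on_pos_deriv:
  fixes U U' :: "real \<Rightarrow> real"
  assumes Iint: "is_interval I" and der: "\<And>x. x \<in> I \<Longrightarrow> (U has_real_derivative U' x) (at x)"
    and pos: "\<And>x. x \<in> I \<Longrightarrow> 0 < U' x"
  shows "strict_mono_on I U"
proof (rule strict_mono_onI)
  fix x z assume x: "x \<in> I" and z: "z \<in> I" and xz: "x < z"
  have "s \<in> I" if "x \<le> s" "s \<le> z" for s using mem_is_interval_1_I[OF Iint x z] that by blast
  then show "U x < U z" using DERIV_pos_imp_increasing[OF xz] der pos by blast
qed

locale U_bounds =
  fixes U U' U'' :: "real \<Rightarrow> real" and I :: "real set" and a b m0 M1 M2 :: real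
  assumes Ider: "\<And>x. x \<in> I \<Longrightarrow> (U has_real_derivative U' x) (at x)"
    and I'der: "\<And>x. x \<in> I \<Longrightarrow> (U' has_real_derivative U'' x) (at x)"
    and Iint: "is_interval I"
    and Ipos: "\<And>x. x \<in> I \<Longrightarrow> 0 < U' x"
    and KI: "{a..b} \<subseteq> I"
    and ab: "a \<le> b"
    and m0: "0 < m0" and bnds: "\<And>x. x \<in> {a..b} \<Longrightarrow> m0 \<le> U' x \<and> U' x \<le> M1 \<and> \<bar>U'' x\<bar> \<le> M2"
begin

lemma U_strict_mono: "strict_mono_on I U"
  using strict_mono_on_pos_deriv[OF Iint Ider Ipos] .

lemma inj_U: "inj_on U I"
  using strict_mono_on_imp_inj_on[OF U_strict_mono] .

lemma m0_le_M1: "m0 \<le> M1" using bnds[of a] ab by auto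

lemma M1_pos: "0 < M1" using m0_le_M1 m0 by simp

lemma U_lipschitz_lt:
  assumes x: "x \<in> {a..b}" and z: "z \<in> {a..b}" and xz: "x < z"
  shows "U z - U x \<le> M1 * (z - x) \<and> m0 * (z - x) \<le> U z - U x"
proof -
  have "\<And>s. x \<le> s \<Longrightarrow> s \<le> z \<Longrightarrow> s \<in> {a..b}" using x z by auto
  then obtain c where c: "x < c" "c < z" "U z - U x = (z - x) * U' c" "c \<in> {a..b}"
    using MVT2[OF xz, of U U'] Ider KI x z by (metis atLeastAtMost_iff less_imp_le subsetD)
  have "m0 \<le> U' c" "U' c \<le> M1" using bnds[OF c(4)] by auto
  then show ?thesis using c(3) xz by (simp add: mult_left_mono mult.commute)
qed

lemma U_lipschitz:
  assumes x: "x \<in> {a..b}" and z: "z \<in> {a..b}"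
  shows "\<bar>U z - U x\<bar> \<le> M1 * \<bar>z - x\<bar> \<and> m0 * \<bar>z - x\<bar> \<le> \<bar>U z - U x\<bar>"
proof (cases x z rule: linorder_cases)
  case less
  have "0 < m0 * (z - x)" using m0 less by simp
  then show ?thesis using U_lipschitz_lt[OF x z less] less by auto
next
  case equal then show ?thesis by simp
next
  case greater
  have "0 < m0 * (x - z)" using m0 greater by simp
  then show ?thesis using U_lipschitz_lt[OF z x greater] greater by auto
qed

lemma U'_lipschitz_lt:
  assumes x: "x \<in> {a..b}" and z: "z \<in> {a..b}" and xz: "x < z"
  shows "\<bar>U' z - U' x\<bar> \<le> M2 * (z - x)"
proof -
  have "\<And>s. x \<le> s \<Longrightarrow> s \<le> z \<Longrightarrow> s \<in> {a..b}" using x z by auto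
  then obtain c where c: "x < c" "c < z" "U' z - U' x = (z - x) * U'' c" "c \<in> {a..b}"
    using MVT2[OF xz, of U' U''] I'der KI x z by (metis atLeastAtMost_iff less_imp_le subsetD)
  have "\<bar>U'' c\<bar> \<le> M2" using bnds[OF c(4)] by auto
  then have "\<bar>(z - x) * U'' c\<bar> \<le> (z - x) * M2" using xz by (simp add: abs_mult mult_left_mono)
  then show ?thesis using c(3) by (simp add: mult.commute)
qed

lemma U'_lipschitz:
  assumes x: "x \<in> {a..b}" and z: "z \<in> {a..b}"
  shows "\<bar>U' z - U' x\<bar> \<le> M2 * \<bar>z - x\<bar>"
proof (cases x z rule: linorder_cases)
  case less
  then show ?thesis using U'_lipschitz_lt[OF x z less] by auto
next
  case equal then show ?thesis by simp
next
  case greater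
  then show ?thesis using U'_lipschitz_lt[OF z x greater] by (auto simp: abs_minus_commute)
qed

lemma U_taylor_lt:
  assumes x: "x \<in> {a..b}" and z: "z \<in> {a..b}" and xz: "x \<noteq> z"
  shows "\<bar>U z - U x - U' x * (z - x)\<bar> \<le> M2 * (z - x)\<^sup>2"
proof -
  define g where "g = (\<lambda>s. U s - U' x * s)"
  define lo where "lo = min x z"
  define hi where "hi = max x z"
  have lohi: "lo < hi" "lo \<in> {a..b}" "hi \<in> {a..b}" using xz x z by (auto simp: lo_def hi_def)
  have der: "DERIV g s :> U' s - U' x" if "lo \<le> s" "s \<le> hi" for s
  proof -
    have "s \<in> I" using that lohi KI by auto
    then show ?thesis unfolding g_def by (auto intro!: derivative_eq_intros Ider)
  qed
  obtain c where c: "lo < c" "c < hi" "g hi - g lo = (hi - lo) * (U' c - U' x)"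
    using MVT2[OF lohi(1) der] by blast
  have cK: "c \<in> {a..b}" using c lohi by auto
  have "\<bar>U' c - U' x\<bar> \<le> M2 * \<bar>c - x\<bar>" using U'_lipschitz[OF x cK] .
  moreover have "\<bar>c - x\<bar> \<le> \<bar>z - x\<bar>" using c by (auto simp: lo_def hi_def)
  moreover have "0 \<le> M2" using bnds[OF x] by auto
  ultimately have b1: "\<bar>U' c - U' x\<bar> \<le> M2 * \<bar>z - x\<bar>" by (meson mult_left_mono order_trans)
  have "\<bar>g z - g x\<bar> = \<bar>z - x\<bar> * \<bar>U' c - U' x\<bar>"
  proof (cases "x < z")
    case True
    then show ?thesis using c(3) by (simp add: lo_def hi_def abs_mult)
  next
    case False
    then have "z < x" using xz by simp
    then show ?thesis using c(3) by (simp add: lo_def hi_def abs_mult abs_minus_commute)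
  qed
  also have "\<dots> \<le> \<bar>z - x\<bar> * (M2 * \<bar>z - x\<bar>)" using b1 by (simp add: mult_left_mono)
  also have "\<dots> = M2 * (z - x)\<^sup>2" by (simp add: power2_eq_square abs_mult_self_eq)
  finally show ?thesis unfolding g_def by (simp add: algebra_simps)
qed

lemma U_taylor:
  assumes x: "x \<in> {a..b}" and z: "z \<in> {a..b}"
  shows "\<bar>U z - U x - U' x * (z - x)\<bar> \<le> M2 * (z - x)\<^sup>2"
  using U_taylor_lt[OF x z] by (cases "x = z") auto

lemma U_image_near:
  assumes y: "y - r \<in> {a..b}" "y + r \<in> {a..b}" and r: "0 < r" and v: "\<bar>v - U y\<bar> \<le> m0 * r"
  shows "v \<in> U ` I"
proof -
  have yK: "y \<in> {a..b}" using y r by auto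
  have l1: "m0 * r \<le> U (y + r) - U y" using U_lipschitz_lt[OF yK y(2)] r by simp
  have l2: "m0 * r \<le> U y - U (y - r)" using U_lipschitz_lt[OF y(1) yK] r by simp
  have "continuous_on {y - r..y + r} U"
  proof (rule DERIV_continuous_on[of _ _ U'])
    fix s assume "s \<in> {y - r..y + r}"
    then have "s \<in> I" using KI y by auto
    then show "(U has_real_derivative U' s) (at s within {y - r..y + r})"
      using Ider has_field_derivative_at_within by blast
  qed
  moreover have "U (y - r) \<le> v" "v \<le> U (y + r)" using l1 l2 v by (auto simp: abs_le_iff)
  ultimately obtain x where x: "y - r \<le> x" "x \<le> y + r" "U x = v"
    using IVT'[of U "y - r" v "y + r"] r by auto
  have "x \<in> I" using x y KI by auto
  then show ?thesis using x by auto
qed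

lemma preimage_near:
  assumes y: "y - r \<in> {a..b}" "y + r \<in> {a..b}" and r: "0 < r" and w: "w \<in> I"
    and v: "\<bar>U w - U y\<bar> < m0 * r"
  shows "\<bar>w - y\<bar> < r"
proof (rule ccontr)
  have yK: "y \<in> {a..b}" using y r by auto
  assume "\<not> \<bar>w - y\<bar> < r"
  then have "y + r \<le> w \<or> w \<le> y - r" by auto
  then show False
  proof
    assume h: "y + r \<le> w"
    have l1: "m0 * r \<le> U (y + r) - U y" using U_lipschitz_lt[OF yK y(2)] r by simp
    have "U (y + r) \<le> U w" using strict_mono_on_leD[OF U_strict_mono _ w h] y KI by auto
    then show False using l1 v by simp
  next
    assume h: "w \<le> y - r"
    have l2: "m0 * r \<le> U y - U (y - r)" using U_lipschitz_lt[OF y(1) yK] r by simp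
    have "U w \<le> U (y - r)" using strict_mono_on_leD[OF U_strict_mono w _ h] y KI by auto
    then show False using l2 v by simp
  qed
qed

text \<open>Constants of the linearisation: \<open>Lq\<close> bounds the Lipschitz constant of an H-map, \<open>Lc\<close> its
  second-order error; \<open>dev_bound n\<close> and \<open>rem_bound n\<close> bound the deviation and the linearisation
  remainder after \<open>n\<close> kicks, in units of the size of the perturbation.\<close>
definition Lq :: real where "Lq = M1 / m0"
definition Lc :: real where "Lc = (M2 + M2 * Lq\<^sup>2) / m0"

fun dev_bound :: "nat \<Rightarrow> real" where
  "dev_bound 0 = 2"
| "dev_bound (Suc n) = Lq * (dev_bound n + 2)"

fun rem_bound :: "nat \<Rightarrow> real" where
  "rem_bound 0 = 0"
| "rem_bound (Suc n) = Lq * rem_bound n + Lc * (dev_bound n + 2)\<^sup>2"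

lemma Lq_ge1: "1 \<le> Lq"
  using m0_le_M1 m0 by (simp add: Lq_def)

lemma M2_nonneg: "0 \<le> M2"
  using bnds[of a] ab by auto

lemma Lc_nonneg: "0 \<le> Lc"
  using M2_nonneg m0 by (simp add: Lc_def)

lemma dev_bound_nonneg: "0 \<le> dev_bound n"
  by (induction n) (use Lq_ge1 in auto)

lemma dev_bound_mono: "n \<le> m \<Longrightarrow> dev_bound n \<le> dev_bound m"
proof (rule lift_Suc_mono_le)
  fix k
  have "dev_bound k + 2 \<le> Lq * (dev_bound k + 2)" using Lq_ge1 dev_bound_nonneg[of k]
    by (simp add: mult_le_cancel_right1)
  then show "dev_bound k \<le> dev_bound (Suc k)" by simp
qed

lemma rem_bound_nonneg: "0 \<le> rem_bound n"
  by (induction n) (use Lq_ge1 Lc_nonneg in auto)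

lemma rem_bound_mono: "n \<le> m \<Longrightarrow> rem_bound n \<le> rem_bound m"
proof (rule lift_Suc_mono_le)
  fix k
  have "rem_bound k \<le> Lq * rem_bound k" using Lq_ge1 rem_bound_nonneg[of k]
    by (simp add: mult_le_cancel_right1)
  moreover have "0 \<le> Lc * (dev_bound k + 2)\<^sup>2" using Lc_nonneg by simp
  ultimately show "rem_bound k \<le> rem_bound (Suc k)" by simp
qed

lemma H_step_estimate:
  assumes yK: "y \<in> {a..b}" and yx: "y + x \<in> {a..b}" and hy: "hy \<in> {a..b}" and w: "w \<in> {a..b}"
    and Uhy: "U hy = U y + e" and Uw: "U w = U (y + x) + e"
  shows "\<bar>w - hy\<bar> \<le> Lq * \<bar>x\<bar>" "\<bar>w - hy - (U' y / U' hy) * x\<bar> \<le> Lc * x\<^sup>2"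
proof -
  have dU: "U w - U hy = U (y + x) - U y" using Uhy Uw by simp
  have l1: "m0 * \<bar>w - hy\<bar> \<le> \<bar>U w - U hy\<bar>" using U_lipschitz[OF hy w] by simp
  have l2: "\<bar>U (y + x) - U y\<bar> \<le> M1 * \<bar>x\<bar>" using U_lipschitz[OF yK yx] by simp
  have "m0 * \<bar>w - hy\<bar> \<le> M1 * \<bar>x\<bar>" using l1 l2 dU by simp
  then show B: "\<bar>w - hy\<bar> \<le> Lq * \<bar>x\<bar>" using m0 unfolding Lq_def
    by (simp add: pos_le_divide_eq mult.commute)
  have T1: "\<bar>U w - U hy - U' hy * (w - hy)\<bar> \<le> M2 * (w - hy)\<^sup>2" using U_taylor[OF hy w] .
  have T2: "\<bar>U (y + x) - U y - U' y * x\<bar> \<le> M2 * x\<^sup>2" using U_taylor[OF yK yx] by simp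
  have sq: "(w - hy)\<^sup>2 \<le> Lq\<^sup>2 * x\<^sup>2"
  proof -
    have "\<bar>w - hy\<bar>\<^sup>2 \<le> (Lq * \<bar>x\<bar>)\<^sup>2" using power_mono[OF B, of 2] by simp
    then show ?thesis by (simp add: power_mult_distrib)
  qed
  have "\<bar>U' hy * (w - hy) - U' y * x\<bar> \<le> M2 * (w - hy)\<^sup>2 + M2 * x\<^sup>2"
    using T1 T2 dU by (smt (verit))
  also have "\<dots> \<le> M2 * (Lq\<^sup>2 * x\<^sup>2) + M2 * x\<^sup>2"
    using sq M2_nonneg by (simp add: mult_left_mono)
  also have "\<dots> = (M2 + M2 * Lq\<^sup>2) * x\<^sup>2" by (simp add: algebra_simps)
  finally have N: "\<bar>U' hy * (w - hy) - U' y * x\<bar> \<le> (M2 + M2 * Lq\<^sup>2) * x\<^sup>2" .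
  have pos: "m0 \<le> U' hy" using bnds[OF hy] by simp
  then have hp: "0 < U' hy" using m0 by simp
  have eq: "w - hy - (U' y / U' hy) * x = (U' hy * (w - hy) - U' y * x) / U' hy"
    using hp by (simp add: field_simps)
  have "\<bar>w - hy - (U' y / U' hy) * x\<bar> = \<bar>U' hy * (w - hy) - U' y * x\<bar> / U' hy"
    unfolding eq using hp by simp
  also have "\<dots> \<le> \<bar>U' hy * (w - hy) - U' y * x\<bar> / m0"
    using pos m0 by (simp add: divide_left_mono)
  also have "\<dots> \<le> (M2 + M2 * Lq\<^sup>2) * x\<^sup>2 / m0"
    using N m0 by (simp add: divide_right_mono)
  finally show "\<bar>w - hy - (U' y / U' hy) * x\<bar> \<le> Lc * x\<^sup>2" by (simp add: Lc_def)
qed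

lemma kick_near:
  assumes y: "y - 2 * rho \<in> {a..b}" "y + 2 * rho \<in> {a..b}"
    and y': "y' - 2 * rho \<in> {a..b}" "y' + 2 * rho \<in> {a..b}"
    and Uy': "U y' = U y + e" and rho: "0 < rho"
    and x: "\<bar>x\<bar> \<le> rho" "M1 * \<bar>x\<bar> < m0 * rho"
  shows "y + x \<in> {a..b}" "Hmap U I e (y + x) \<in> {a..b}" "U (Hmap U I e (y + x)) = U (y + x) + e"
proof -
  have yK: "y \<in> {a..b}" using y rho by auto
  have y'1: "y' - rho \<in> {a..b}" "y' + rho \<in> {a..b}" using y' rho by auto
  show yxK: "y + x \<in> {a..b}" using y x(1) rho by (auto simp: abs_le_iff)
  have Ux_small: "\<bar>U (y + x) - U y\<bar> < m0 * rho" using U_lipschitz[OF yK yxK] x(2) by simp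
  have "U (y + x) + e \<in> U ` I"
    by (rule U_image_near[OF y'1 rho]) (use Ux_small Uy' in simp)
  moreover have "y + x \<in> I" using yxK KI by auto
  ultimately have wI: "Hmap U I e (y + x) \<in> I" and Uw: "U (Hmap U I e (y + x)) = U (y + x) + e"
    using Hmap_spec[OF inj_U] by auto
  show "U (Hmap U I e (y + x)) = U (y + x) + e" by (rule Uw)
  have "\<bar>U (Hmap U I e (y + x)) - U y'\<bar> < m0 * rho" using Uw Uy' Ux_small by simp
  then have "\<bar>Hmap U I e (y + x) - y'\<bar> < rho" using preimage_near[OF y'1 rho wI] by simp
  then show "Hmap U I e (y + x) \<in> {a..b}" using y' rho by (auto simp: abs_less_iff)
qed

text \<open>The derivative of an H-map between points of \<open>[a, b]\<close> is at most \<open>Lq\<close>.\<close>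
lemma U'_ratio_bound:
  assumes "y \<in> {a..b}" "y' \<in> {a..b}"
  shows "0 \<le> U' y / U' y'" "U' y / U' y' \<le> Lq"
proof -
  have a1: "m0 \<le> U' y" "U' y \<le> M1" and a2: "m0 \<le> U' y'" using bnds assms by auto
  show "0 \<le> U' y / U' y'" using a1 a2 m0 by simp
  have "U' y / U' y' \<le> M1 / U' y'" using a1 a2 m0 by (simp add: divide_right_mono)
  also have "\<dots> \<le> M1 / m0" using a2 m0 M1_pos by (simp add: divide_left_mono)
  finally show "U' y / U' y' \<le> Lq" by (simp add: Lq_def)
qed

text \<open>The smallness assumptions keep every intermediate point inside \<open>[a, b]\<close> and in the range of
  \<open>U\<close>.\<close>
lemma psi_linearisation:
  fixes psi y Lam d e :: "nat \<Rightarrow> real" and k :: nat and rho eps0 :: real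
  assumes yK: "\<And>n. n \<le> k \<Longrightarrow> y n - 2 * rho \<in> {a..b} \<and> y n + 2 * rho \<in> {a..b}"
    and yU: "\<And>n. n < k \<Longrightarrow> U (y (Suc n)) = U (y n) + e (Suc n)"
    and psiS: "\<And>n. n < k \<Longrightarrow> psi (Suc n) = Hmap U I (e (Suc n)) (psi n + d n - d (Suc n))"
    and LamS: "\<And>n. n < k \<Longrightarrow> Lam (Suc n) = (U' (y n) / U' (y (Suc n))) * (Lam n + d n - d (Suc n))"
    and psi0: "psi 0 = y 0 + Lam 0" and Lam0: "\<bar>Lam 0\<bar> \<le> 2 * eps0"
    and dB: "\<And>n. n \<le> k \<Longrightarrow> \<bar>d n\<bar> \<le> eps0"
    and rho: "0 < rho" and eps0: "0 \<le> eps0"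
    and small1: "(dev_bound k + 2) * eps0 \<le> rho"
    and small2: "M1 * ((dev_bound k + 2) * eps0) < m0 * rho"
  shows "n \<le> k \<Longrightarrow> \<bar>psi n - y n\<bar> \<le> dev_bound n * eps0 \<and> \<bar>psi n - y n - Lam n\<bar> \<le> rem_bound n * eps0\<^sup>2"
proof (induction n)
  case 0
  then show ?case using psi0 Lam0 by simp
next
  case (Suc n)
  have nk: "n < k" using Suc.prems by simp
  note IH = Suc.IH[OF less_imp_le[OF nk]]
  have yn: "y n - 2 * rho \<in> {a..b}" "y n + 2 * rho \<in> {a..b}"
    and ys: "y (Suc n) - 2 * rho \<in> {a..b}" "y (Suc n) + 2 * rho \<in> {a..b}"
    using yK[of n] yK[of "Suc n"] nk by auto
  then have ynK: "y n \<in> {a..b}" and ysK: "y (Suc n) \<in> {a..b}" using rho by auto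
  define x where "x = psi n + d n - d (Suc n) - y n"
  have xB: "\<bar>x\<bar> \<le> (dev_bound n + 2) * eps0"
    using IH dB[of n] dB[of "Suc n"] nk unfolding x_def by (auto simp: algebra_simps)
  have BB: "(dev_bound n + 2) * eps0 \<le> (dev_bound k + 2) * eps0"
    using dev_bound_mono[of n k] nk eps0 by (simp add: mult_right_mono)
  have xk: "\<bar>x\<bar> \<le> (dev_bound k + 2) * eps0" using xB BB by linarith
  then have "M1 * \<bar>x\<bar> \<le> M1 * ((dev_bound k + 2) * eps0)" using M1_pos by (simp add: mult_left_mono)
  then have x_small: "\<bar>x\<bar> \<le> rho" "M1 * \<bar>x\<bar> < m0 * rho" using xk small1 small2 by linarith+
  define w where "w = psi (Suc n)"
  have w_eq: "w = Hmap U I (e (Suc n)) (y n + x)" using psiS[OF nk] unfolding w_def x_def by (simp add: add_diff_eq)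
  note near = kick_near[OF yn ys yU[OF nk] rho x_small, folded w_eq]
  note H = H_step_estimate[OF ynK near(1) ysK near(2) yU[OF nk] near(3)]
  have B: "\<bar>w - y (Suc n)\<bar> \<le> dev_bound (Suc n) * eps0"
  proof -
    have "Lq * \<bar>x\<bar> \<le> Lq * ((dev_bound n + 2) * eps0)" using xB Lq_ge1 by (simp add: mult_left_mono)
    then show ?thesis using H(1) by simp
  qed
  define q where "q = U' (y n) / U' (y (Suc n))"
  have q: "0 \<le> q" "q \<le> Lq" unfolding q_def using U'_ratio_bound[OF ynK ysK] by auto
  have decomp: "w - y (Suc n) - Lam (Suc n) = (w - y (Suc n) - q * x) + q * (psi n - y n - Lam n)"
    unfolding LamS[OF nk, folded q_def] x_def by (simp add: algebra_simps)
  have t1: "\<bar>w - y (Suc n) - q * x\<bar> \<le> Lc * ((dev_bound n + 2) * eps0)\<^sup>2"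
  proof -
    have "x\<^sup>2 \<le> ((dev_bound n + 2) * eps0)\<^sup>2"
      using power_mono[OF xB, of 2] by simp
    then have "Lc * x\<^sup>2 \<le> Lc * ((dev_bound n + 2) * eps0)\<^sup>2" using Lc_nonneg by (simp add: mult_left_mono)
    then show ?thesis using H(2) unfolding q_def by simp
  qed
  have t2: "\<bar>q * (psi n - y n - Lam n)\<bar> \<le> Lq * (rem_bound n * eps0\<^sup>2)"
  proof -
    have "\<bar>q * (psi n - y n - Lam n)\<bar> = q * \<bar>psi n - y n - Lam n\<bar>" using q by (simp add: abs_mult)
    also have "\<dots> \<le> Lq * (rem_bound n * eps0\<^sup>2)"
      using IH q Lq_ge1 by (meson abs_ge_zero mult_mono order_trans zero_le_one)
    finally show ?thesis .
  qed
  have C: "\<bar>w - y (Suc n) - Lam (Suc n)\<bar> \<le> rem_bound (Suc n) * eps0\<^sup>2"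
  proof -
    have "\<bar>w - y (Suc n) - Lam (Suc n)\<bar> \<le> Lc * ((dev_bound n + 2) * eps0)\<^sup>2 + Lq * (rem_bound n * eps0\<^sup>2)"
      unfolding decomp using t1 t2 abs_triangle_ineq order_trans add_mono by fastforce
    also have "\<dots> = rem_bound (Suc n) * eps0\<^sup>2" unfolding power_mult_distrib rem_bound.simps by (simp add: algebra_simps)
    finally show ?thesis .
  qed
  show ?case using B C w_def by simp
qed

end

text \<open>The linearised deviation: it is propagated through the \<open>n\<close>-th kick by the factor
  \<open>U' (y n) / U' (y (n + 1))\<close>, the derivative of the H-map, while the arrival times shift by \<open>d\<close>.\<close>
fun lin_dev :: "(real \<Rightarrow> real) \<Rightarrow> (nat \<Rightarrow> real) \<Rightarrow> (nat \<Rightarrow> real) \<Rightarrow> real \<Rightarrow> nat \<Rightarrow> real" where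
  "lin_dev U' y d l0 0 = l0"
| "lin_dev U' y d l0 (Suc n) = (U' (y n) / U' (y (Suc n))) * (lin_dev U' y d l0 n + d n - d (Suc n))"

text \<open>Summation by parts: the linearised deviation is a combination of the shifts with the
  increments of \<open>U'\<close> along the unperturbed trajectory as weights.\<close>
lemma lin_dev_telescope:
  assumes nz: "\<And>m. m \<le> n \<Longrightarrow> U' (y m) \<noteq> 0"
  shows "U' (y n) * (lin_dev U' y d l0 n + d n)
    = U' (y 0) * (l0 + d 0) + (\<Sum>m\<in>{1..n}. (U' (y m) - U' (y (m - 1))) * d m)"
  using nz
proof (induction n)
  case 0 then show ?case by simp
next
  case (Suc n)
  have "U' (y (Suc n)) * (lin_dev U' y d l0 (Suc n) + d (Suc n))
      = U' (y n) * (lin_dev U' y d l0 n + d n) + (U' (y (Suc n)) - U' (y n)) * d (Suc n)"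
    using Suc.prems[of "Suc n"] by (simp add: field_simps)
  also have "\<dots> = U' (y 0) * (l0 + d 0) + (\<Sum>m\<in>{1..Suc n}. (U' (y m) - U' (y (m - 1))) * d m)"
    using Suc by simp
  finally show ?case .
qed

lemma stabA_row:
  assumes i: "i \<in> {1..N}" and bij: "bij_betw (Ord i) {1..card (Pre i)} (Pre i)"
    and sub: "Pre i \<subseteq> {1..N} - {i}"
  shows "(\<Sum>l\<in>{1..N}. stabA U U' I Pre eps epsilon tau Ord i l * delta l)
     = pcoef U U' I eps epsilon tau Ord i 0 * delta i
       + (\<Sum>n\<in>{1..card (Pre i)}. (pcoef U U' I eps epsilon tau Ord i n - pcoef U U' I eps epsilon tau Ord i (n - 1)) * delta (Ord i n))"
proof -
  let ?k = "card (Pre i)"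
  let ?P = "pcoef U U' I eps epsilon tau Ord i"
  let ?f = "\<lambda>l. stabA U U' I Pre eps epsilon tau Ord i l * delta l"
  have inj: "inj_on (Ord i) {1..?k}" using bij bij_betw_imp_inj_on by blast
  have surj: "Ord i ` {1..?k} = Pre i" using bij bij_betw_imp_surj_on by blast
  have fin: "finite {1..N}" by simp
  have s1: "(\<Sum>l\<in>{1..N}. ?f l) = ?f i + (\<Sum>l\<in>{1..N} - {i}. ?f l)"
    using sum.remove[OF fin i] by simp
  have fi: "?f i = ?P 0 * delta i" by (simp add: stabA_def)
  have s2: "(\<Sum>l\<in>{1..N} - {i}. ?f l) = (\<Sum>l\<in>Pre i. ?f l)"
  proof (rule sum.mono_neutral_right)
    show "finite ({1..N} - {i})" by simp
    show "Pre i \<subseteq> {1..N} - {i}" using sub .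
    show "\<forall>l\<in>{1..N} - {i} - Pre i. ?f l = 0"
    proof
      fix l assume l: "l \<in> {1..N} - {i} - Pre i"
      then have "\<not> (\<exists>n\<in>{1..?k}. Ord i n = l)" using surj by auto
      then show "?f l = 0" using l by (simp add: stabA_def)
    qed
  qed
  have s3: "(\<Sum>l\<in>Pre i. ?f l) = (\<Sum>n\<in>{1..?k}. ?f (Ord i n))"
  proof -
    have "(\<Sum>l\<in>Ord i ` {1..?k}. ?f l) = (\<Sum>n\<in>{1..?k}. ?f (Ord i n))"
      by (rule sum.reindex[OF inj, unfolded comp_def])
    then show ?thesis by (simp only: surj)
  qed
  have s4: "?f (Ord i n) = (?P n - ?P (n - 1)) * delta (Ord i n)" if n: "n \<in> {1..?k}" for n
  proof -
    have "Ord i n \<in> Pre i" using surj n by blast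
    then have ni: "Ord i n \<noteq> i" using sub by blast
    have ex: "\<exists>n'\<in>{1..?k}. Ord i n' = Ord i n" using n by auto
    have th: "(THE n'. n' \<in> {1..?k} \<and> Ord i n' = Ord i n) = n"
    proof (rule the_equality)
      show "n \<in> {1..?k} \<and> Ord i n = Ord i n" using n by simp
      fix n' assume "n' \<in> {1..?k} \<and> Ord i n' = Ord i n"
      then show "n' = n" using inj_onD[OF inj] n by blast
    qed
    have "stabA U U' I Pre eps epsilon tau Ord i (Ord i n) = ?P n - ?P (n - 1)"
      unfolding stabA_def Let_def by (simp only: ni ex th if_False if_True)
    then show ?thesis by simp
  qed
  show ?thesis using s1 fi s2 s3 s4 by simp
qed

locale perturbed_network = U_bounds +
  fixes N :: nat and Pre :: "nat \<Rightarrow> nat set" and eps :: "nat \<Rightarrow> nat \<Rightarrow> real"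
    and epsilon tau theta ymax beta rho :: real and delta :: "nat \<Rightarrow> real" and Ord :: "nat \<Rightarrow> nat \<Rightarrow> nat"
  assumes N1: "1 \<le> N"
    and Pre_sub: "\<And>i. i \<in> {1..N} \<Longrightarrow> Pre i \<subseteq> {1..N} - {i}"
    and Pre_ne: "\<And>i. i \<in> {1..N} \<Longrightarrow> Pre i \<noteq> {}"
    and eps_Pre: "\<And>i. i \<in> {1..N} \<Longrightarrow> (\<Sum>j\<in>Pre i. eps i j) = epsilon"
    and tau: "0 < tau" "tau < 1" "tau \<in> I"
    and in_range: "\<And>i S. i \<in> {1..N} \<Longrightarrow> S \<subseteq> Pre i \<Longrightarrow> U tau + (\<Sum>j\<in>S. eps i j) \<in> U ` I"
    and rho: "0 < rho"
    and margins: "\<And>i S. i \<in> {1..N} \<Longrightarrow> S \<subseteq> Pre i \<Longrightarrow>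
        the_inv_into I U (U tau + (\<Sum>j\<in>S. eps i j)) - 2 * rho \<in> {a..b} \<and>
        the_inv_into I U (U tau + (\<Sum>j\<in>S. eps i j)) + 2 * rho \<in> {a..b} \<and>
        the_inv_into I U (U tau + (\<Sum>j\<in>S. eps i j)) \<le> ymax \<and>
        U tau + (\<Sum>j\<in>S. eps i j) \<le> 1 - beta"
    and small: "(dev_bound N + 2) * dnorm N delta \<le> rho"
      "M1 * ((dev_bound N + 2) * dnorm N delta) < m0 * rho"
      "M1 * ((dev_bound N + 2) * dnorm N delta) < beta"
      "ymax + (dev_bound N + 2) * dnorm N delta < 1"
      "theta + (dev_bound N + 2) * dnorm N delta < 1"
      "dnorm N delta < theta - the_inv_into I U (U tau + epsilon)"
      "2 * dnorm N delta < 1 - tau"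
    and spread: "\<And>i j. i \<in> {1..N} \<Longrightarrow> j \<in> {1..N} \<Longrightarrow> delta i - delta j < tau"
    and Ord_bij: "\<And>i. i \<in> {1..N} \<Longrightarrow> bij_betw (Ord i) {1..card (Pre i)} (Pre i)"
    and Ord_sorted: "\<And>i n m. i \<in> {1..N} \<Longrightarrow> 1 \<le> n \<Longrightarrow> n \<le> m \<Longrightarrow> m \<le> card (Pre i)
        \<Longrightarrow> delta (Ord i m) \<le> delta (Ord i n)"
begin

text \<open>The unperturbed phase \<open>ref_phase i n\<close> of unit \<open>i\<close> after its \<open>n\<close>-th kick, the arrival time
  shift \<open>arr_shift i n\<close> of that kick, the linearised deviation \<open>lin_phase i n\<close>, and the length
  \<open>Tend\<close> of the synchronous period.\<close>
definition dsize :: real where "dsize = dnorm N delta"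
definition ref_phase :: "nat \<Rightarrow> nat \<Rightarrow> real" where
  "ref_phase i n = the_inv_into I U (U tau + (\<Sum>m = 1..n. eps i (Ord i m)))"
definition arr_shift :: "nat \<Rightarrow> nat \<Rightarrow> real" where "arr_shift i n = delta (Ord i (max 1 n))"
definition lin_phase :: "nat \<Rightarrow> nat \<Rightarrow> real" where
  "lin_phase i = lin_dev U' (ref_phase i) (arr_shift i) (delta i - arr_shift i 1)"
definition alpha :: real where "alpha = the_inv_into I U (U tau + epsilon)"
definition Tend :: real where "Tend = tau + 1 - alpha"

sublocale S: period_schedule U I N Pre eps tau theta Tend delta Ord .

lemmas small_dsize = small[folded dsize_def alpha_def]

lemma delta_bound: "l \<in> {1..N} \<Longrightarrow> \<bar>delta l\<bar> \<le> dsize"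
  unfolding dsize_def dnorm_def by (intro Max_ge) auto

lemma dsize_nonneg: "0 \<le> dsize"
  using delta_bound[of 1] N1 by force

lemma Ord_inj: "i \<in> {1..N} \<Longrightarrow> inj_on (Ord i) {1..card (Pre i)}"
  using Ord_bij bij_betw_imp_inj_on by blast

lemma Ord_surj: "i \<in> {1..N} \<Longrightarrow> Ord i ` {1..card (Pre i)} = Pre i"
  using Ord_bij bij_betw_imp_surj_on by blast

lemma finite_Pre: "i \<in> {1..N} \<Longrightarrow> finite (Pre i)"
  using Pre_sub finite_subset by blast

lemma card_Pre_le: "i \<in> {1..N} \<Longrightarrow> card (Pre i) \<le> N"
  using card_mono[of "{1..N}" "Pre i"] Pre_sub by fastforce

lemma card_Pre_pos: "i \<in> {1..N} \<Longrightarrow> 1 \<le> card (Pre i)"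
  using Pre_ne finite_Pre by (simp add: Suc_le_eq card_gt_0_iff)

lemma Ord_in_units: "i \<in> {1..N} \<Longrightarrow> n \<in> {1..card (Pre i)} \<Longrightarrow> Ord i n \<in> {1..N}"
  using Ord_surj Pre_sub by blast

lemma sum_Ord_prefix:
  assumes i: "i \<in> {1..N}" and n: "n \<le> card (Pre i)"
  shows "(\<Sum>m = 1..n. eps i (Ord i m)) = (\<Sum>j\<in>Ord i ` {1..n}. eps i j)" "Ord i ` {1..n} \<subseteq> Pre i"
proof -
  have sub: "{1..n} \<subseteq> {1..card (Pre i)}" using n by auto
  show "(\<Sum>m = 1..n. eps i (Ord i m)) = (\<Sum>j\<in>Ord i ` {1..n}. eps i j)"
    using sum.reindex[OF inj_on_subset[OF Ord_inj[OF i] sub], of "eps i"] by (simp add: comp_def)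
  show "Ord i ` {1..n} \<subseteq> Pre i" using Ord_surj[OF i] sub by blast
qed

lemma ref_phase_margins:
  assumes i: "i \<in> {1..N}" and n: "n \<le> card (Pre i)"
  shows "ref_phase i n - 2 * rho \<in> {a..b}" "ref_phase i n + 2 * rho \<in> {a..b}" "ref_phase i n \<le> ymax"
  using margins[OF i sum_Ord_prefix(2)[OF i n]] sum_Ord_prefix(1)[OF i n] unfolding ref_phase_def by simp_all

lemma ref_phase_spec:
  assumes i: "i \<in> {1..N}" and n: "n \<le> card (Pre i)"
  shows "ref_phase i n \<in> I" "U (ref_phase i n) = U tau + (\<Sum>m = 1..n. eps i (Ord i m))"
proof -
  have "U tau + (\<Sum>m = 1..n. eps i (Ord i m)) \<in> U ` I"
    using in_range[OF i sum_Ord_prefix(2)[OF i n]] sum_Ord_prefix(1)[OF i n] by simp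
  then show "ref_phase i n \<in> I" "U (ref_phase i n) = U tau + (\<Sum>m = 1..n. eps i (Ord i m))"
    unfolding ref_phase_def using inj_U by (auto simp: the_inv_into_into f_the_inv_into_f)
qed

lemma ref_phase_0: "ref_phase i 0 = tau"
  unfolding ref_phase_def using inj_U tau(3) by (simp add: the_inv_into_f_f)

lemma ref_phase_last: "i \<in> {1..N} \<Longrightarrow> ref_phase i (card (Pre i)) = alpha"
  using sum_Ord_prefix(1)[OF _ order_refl] Ord_surj eps_Pre
  unfolding ref_phase_def alpha_def by simp

lemma arr_shift_bound:
  assumes i: "i \<in> {1..N}" and n: "n \<le> card (Pre i)"
  shows "\<bar>arr_shift i n\<bar> \<le> dsize"
proof -
  have "max 1 n \<in> {1..card (Pre i)}" using n card_Pre_pos[OF i] by auto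
  then show ?thesis using delta_bound Ord_in_units[OF i] unfolding arr_shift_def by blast
qed

lemma arrival_eq: "S.arrival i n = 1 - theta - arr_shift i n + tau"
  by (simp add: S.arrival_def S.fire_def arr_shift_def)

lemma dev_bound_le: "n \<le> N \<Longrightarrow> dev_bound n * dsize \<le> dev_bound N * dsize"
  using dev_bound_mono dsize_nonneg by (simp add: mult_right_mono)

lemma psi_close:
  assumes i: "i \<in> {1..N}" and n: "n \<le> card (Pre i)"
  shows "\<bar>S.psi i n - ref_phase i n\<bar> \<le> dev_bound n * dsize"
    and "\<bar>S.psi i n - ref_phase i n - lin_phase i n\<bar> \<le> rem_bound n * dsize\<^sup>2"
proof -
  have BB: "(dev_bound (card (Pre i)) + 2) * dsize \<le> (dev_bound N + 2) * dsize"
    using dev_bound_le[OF card_Pre_le[OF i]] by (simp add: distrib_right)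
  have "\<bar>S.psi i n - ref_phase i n\<bar> \<le> dev_bound n * dsize
      \<and> \<bar>S.psi i n - ref_phase i n - lin_phase i n\<bar> \<le> rem_bound n * dsize\<^sup>2"
  proof (rule psi_linearisation[where k = "card (Pre i)" and e = "\<lambda>n. eps i (Ord i n)"
        and d = "arr_shift i" and rho = rho])
    show "\<And>n. n \<le> card (Pre i) \<Longrightarrow> ref_phase i n - 2 * rho \<in> {a..b} \<and> ref_phase i n + 2 * rho \<in> {a..b}"
      using ref_phase_margins[OF i] by blast
    show "\<And>n. n < card (Pre i) \<Longrightarrow> U (ref_phase i (Suc n)) = U (ref_phase i n) + eps i (Ord i (Suc n))"
      using ref_phase_spec(2)[OF i] by simp
    show "\<And>n. n < card (Pre i) \<Longrightarrow>
        S.psi i (Suc n) = Hmap U I (eps i (Ord i (Suc n))) (S.psi i n + arr_shift i n - arr_shift i (Suc n))"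
      by (simp add: arrival_eq algebra_simps)
    show "\<And>n. n < card (Pre i) \<Longrightarrow> lin_phase i (Suc n)
        = U' (ref_phase i n) / U' (ref_phase i (Suc n)) * (lin_phase i n + arr_shift i n - arr_shift i (Suc n))"
      by (simp add: lin_phase_def)
    show "S.psi i 0 = ref_phase i 0 + lin_phase i 0" by (simp add: ref_phase_0 lin_phase_def arr_shift_def)
    show "\<bar>lin_phase i 0\<bar> \<le> 2 * dsize"
      using delta_bound[OF i] arr_shift_bound[OF i card_Pre_pos[OF i]] by (simp add: lin_phase_def)
    show "\<And>n. n \<le> card (Pre i) \<Longrightarrow> \<bar>arr_shift i n\<bar> \<le> dsize" using arr_shift_bound[OF i] by blast
    show "(dev_bound (card (Pre i)) + 2) * dsize \<le> rho" using BB small_dsize(1) by simp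
    have "M1 * ((dev_bound (card (Pre i)) + 2) * dsize) \<le> M1 * ((dev_bound N + 2) * dsize)"
      by (rule mult_left_mono[OF BB]) (use M1_pos in simp)
    then show "M1 * ((dev_bound (card (Pre i)) + 2) * dsize) < m0 * rho" using small_dsize(2) by linarith
  qed (use rho dsize_nonneg n in auto)
  then show "\<bar>S.psi i n - ref_phase i n\<bar> \<le> dev_bound n * dsize"
    and "\<bar>S.psi i n - ref_phase i n - lin_phase i n\<bar> \<le> rem_bound n * dsize\<^sup>2" by auto
qed

text \<open>Every partial block of kicks received by a unit is subthreshold and stays in the range of
  \<open>U\<close>: the phase before the block is within \<open>(dev_bound N + 2) dsize\<close> of the unperturbed one.\<close>
lemma perturbed_kicks_subthreshold:
  assumes i: "i \<in> {1..N}" and m: "m < card (Pre i)" and S: "S \<subseteq> Pre i - Ord i ` {1..m}"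
  shows "S.psi i m + S.arrival i (Suc m) - S.arrival i m \<in> I
    \<and> U (S.psi i m + S.arrival i (Suc m) - S.arrival i m) + (\<Sum>j\<in>S. eps i j) \<in> U ` I
    \<and> U (S.psi i m + S.arrival i (Suc m) - S.arrival i m) + (\<Sum>j\<in>S. eps i j) < 1"
proof -
  have mk: "m \<le> card (Pre i)" using m by simp
  define x where "x = S.psi i m + S.arrival i (Suc m) - S.arrival i m"
  have "\<bar>x - ref_phase i m\<bar> \<le> \<bar>S.psi i m - ref_phase i m\<bar> + \<bar>arr_shift i m\<bar> + \<bar>arr_shift i (Suc m)\<bar>"
    unfolding x_def arrival_eq by linarith
  moreover have "\<bar>S.psi i m - ref_phase i m\<bar> \<le> dev_bound N * dsize"
    using psi_close(1)[OF i mk] dev_bound_le[of m] card_Pre_le[OF i] m by linarith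
  moreover have "\<bar>arr_shift i m\<bar> \<le> dsize" "\<bar>arr_shift i (Suc m)\<bar> \<le> dsize"
    using arr_shift_bound[OF i] m by auto
  ultimately have x_close: "\<bar>x - ref_phase i m\<bar> \<le> (dev_bound N + 2) * dsize" by (simp add: algebra_simps)
  have yK: "ref_phase i m - 2 * rho \<in> {a..b}" "ref_phase i m + 2 * rho \<in> {a..b}"
    using ref_phase_margins[OF i mk] by auto
  then have ymK: "ref_phase i m \<in> {a..b}" using rho by auto
  have xK: "x \<in> {a..b}" using x_close small_dsize(1) yK rho by (auto simp: abs_le_iff)
  have Ux_close: "\<bar>U x - U (ref_phase i m)\<bar> \<le> M1 * ((dev_bound N + 2) * dsize)"
    using U_lipschitz[OF ymK xK] x_close M1_pos
    by (meson less_eq_real_def mult_left_mono order_trans)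
  define T where "T = Ord i ` {1..m} \<union> S"
  have TP: "T \<subseteq> Pre i" using S sum_Ord_prefix(2)[OF i mk] unfolding T_def by blast
  have finS: "finite S" using S finite_Pre[OF i] finite_subset by blast
  have "(\<Sum>j\<in>T. eps i j) = (\<Sum>j\<in>Ord i ` {1..m}. eps i j) + (\<Sum>j\<in>S. eps i j)"
    unfolding T_def using S finS by (intro sum.union_disjoint) auto
  then have shift_T: "U x + (\<Sum>j\<in>S. eps i j) - (U tau + (\<Sum>j\<in>T. eps i j)) = U x - U (ref_phase i m)"
    using ref_phase_spec(2)[OF i mk] sum_Ord_prefix(1)[OF i mk] by simp
  define yT where "yT = the_inv_into I U (U tau + (\<Sum>j\<in>T. eps i j))"
  have YT: "yT - rho \<in> {a..b}" "yT + rho \<in> {a..b}" "U tau + (\<Sum>j\<in>T. eps i j) \<le> 1 - beta"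
    using margins[OF i TP] rho unfolding yT_def by auto
  have UyT: "U yT = U tau + (\<Sum>j\<in>T. eps i j)"
    using in_range[OF i TP] inj_U unfolding yT_def by (simp add: f_the_inv_into_f)
  have "U x + (\<Sum>j\<in>S. eps i j) \<in> U ` I"
    by (rule U_image_near[OF YT(1,2) rho]) (use shift_T UyT Ux_close small_dsize(2) in simp)
  moreover have "U x + (\<Sum>j\<in>S. eps i j) < 1"
    using shift_T Ux_close small_dsize(3) YT(3) by (simp add: abs_le_iff)
  ultimately show ?thesis using xK KI unfolding x_def by auto
qed

lemma schedule_regular: "regular_schedule U I N Pre eps tau theta Tend delta Ord"
proof unfold_locales
  show "inj_on U I" by (rule inj_U)
  show "1 \<le> N" by (rule N1)
  show "\<And>i. i \<in> {1..N} \<Longrightarrow> Pre i \<subseteq> {1..N}" using Pre_sub by blast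
  show "\<And>i. i \<in> {1..N} \<Longrightarrow> Pre i \<noteq> {}" by (rule Pre_ne)
  show "\<And>i. i \<in> {1..N} \<Longrightarrow> bij_betw (Ord i) {1..card (Pre i)} (Pre i)" by (rule Ord_bij)
  show "\<And>i n m. i \<in> {1..N} \<Longrightarrow> 1 \<le> n \<Longrightarrow> n \<le> m \<Longrightarrow> m \<le> card (Pre i) \<Longrightarrow> delta (Ord i m) \<le> delta (Ord i n)"
    by (rule Ord_sorted)
  show "\<And>i j. i \<in> {1..N} \<Longrightarrow> j \<in> {1..N} \<Longrightarrow> delta i - delta j < tau" by (rule spread)
  have dev_ge: "dsize \<le> (dev_bound N + 2) * dsize"
    using dev_bound_nonneg dsize_nonneg by (simp add: mult_le_cancel_right1)
  show "delta i - delta j < 1 - tau" if "i \<in> {1..N}" "j \<in> {1..N}" for i j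
    using delta_bound[OF that(1)] delta_bound[OF that(2)] small_dsize(7) by (simp add: abs_le_iff)
  show "theta + delta i < 1" if "i \<in> {1..N}" for i
    using delta_bound[OF that] small_dsize(5) dev_ge by (simp add: abs_le_iff)
  show "S.psi i n + delta j - delta l < 1"
    if i: "i \<in> {1..N}" and n: "1 \<le> n" "n \<le> card (Pre i)" and "j \<in> {1..N}" "l \<in> {1..N}" for i n j l
  proof -
    have "S.psi i n \<le> ymax + dev_bound N * dsize"
      using psi_close(1)[OF i n(2)] ref_phase_margins(3)[OF i n(2)] dev_bound_le[of n] card_Pre_le[OF i] n
      by (simp add: abs_le_iff)
    moreover have "delta j - delta l \<le> 2 * dsize"
      using delta_bound[OF that(4)] delta_bound[OF that(5)] by (simp add: abs_le_iff)
    ultimately show ?thesis using small_dsize(4) by (simp add: algebra_simps)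
  qed
  show "\<And>i m. i \<in> {1..N} \<Longrightarrow> m < card (Pre i) \<Longrightarrow>
      S.psi i m + S.arrival i (Suc m) - S.arrival i m \<in> I \<and>
      (\<forall>S \<subseteq> Pre i - Ord i ` {1..m}.
         U (S.psi i m + S.arrival i (Suc m) - S.arrival i m) + (\<Sum>j\<in>S. eps i j) \<in> U ` I \<and>
         U (S.psi i m + S.arrival i (Suc m) - S.arrival i m) + (\<Sum>j\<in>S. eps i j) < 1)"
    using perturbed_kicks_subthreshold by blast
  have "S.fire j + tau < Tend" if "j \<in> {1..N}" for j
    using delta_bound[OF that] small_dsize(6) by (simp add: S.fire_def Tend_def abs_le_iff)
  then show "S.last_arr < Tend"
    unfolding S.last_arr_def using N1 by (subst Max_less_iff) auto
  show "S.psi i (card (Pre i)) + Tend - S.arrival i (card (Pre i)) < 1" if i: "i \<in> {1..N}" for i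
  proof -
    have "S.psi i (card (Pre i)) \<le> alpha + dev_bound N * dsize"
      using psi_close(1)[OF i order_refl] ref_phase_last[OF i] dev_bound_le[OF card_Pre_le[OF i]]
      by (simp add: abs_le_iff)
    moreover have "arr_shift i (card (Pre i)) \<le> dsize" using arr_shift_bound[OF i order_refl] by (simp add: abs_le_iff)
    ultimately show ?thesis using small_dsize(5) dsize_nonneg unfolding arrival_eq Tend_def
      by (simp add: algebra_simps)
  qed
qed

lemma stabA_row_eq:
  assumes i: "i \<in> {1..N}"
  shows "(\<Sum>l\<in>{1..N}. stabA U U' I Pre eps epsilon tau Ord i l * delta l)
    = lin_phase i (card (Pre i)) + arr_shift i (card (Pre i))"
proof -
  let ?k = "card (Pre i)"
  have U'pos: "0 < U' (ref_phase i n)" if "n \<le> ?k" for n using Ipos ref_phase_spec(1)[OF i that] .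
  have alpha_pos: "0 < U' alpha" using U'pos[of ?k] ref_phase_last[OF i] by simp
  have P: "pcoef U U' I eps epsilon tau Ord i n = U' (ref_phase i n) / U' alpha" for n
    by (simp add: pcoef_def ref_phase_def alpha_def)
  have "(\<Sum>n\<in>{1..?k}. (pcoef U U' I eps epsilon tau Ord i n - pcoef U U' I eps epsilon tau Ord i (n - 1)) * delta (Ord i n))
      = (\<Sum>m\<in>{1..?k}. (U' (ref_phase i m) - U' (ref_phase i (m - 1))) * arr_shift i m) / U' alpha"
    unfolding sum_divide_distrib P
    by (rule sum.cong) (use alpha_pos in \<open>auto simp: arr_shift_def field_simps\<close>)
  then have "(\<Sum>l\<in>{1..N}. stabA U U' I Pre eps epsilon tau Ord i l * delta l)
      = (U' (ref_phase i 0) * delta i + (\<Sum>m\<in>{1..?k}. (U' (ref_phase i m) - U' (ref_phase i (m - 1))) * arr_shift i m)) / U' alpha"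
    using stabA_row[where U = U and U' = U' and I = I and eps = eps and epsilon = epsilon and tau = tau
        and delta = delta and i = i and N = N and Ord = Ord and Pre = Pre, OF i Ord_bij[OF i] Pre_sub[OF i]] P[of 0] alpha_pos by (simp add: add_divide_distrib)
  also have "\<dots> = U' (ref_phase i ?k) * (lin_phase i ?k + arr_shift i ?k) / U' alpha"
  proof -
    have "U' (ref_phase i ?k) * (lin_phase i ?k + arr_shift i ?k)
        = U' (ref_phase i 0) * (delta i - arr_shift i 1 + arr_shift i 0)
          + (\<Sum>m\<in>{1..?k}. (U' (ref_phase i m) - U' (ref_phase i (m - 1))) * arr_shift i m)"
      unfolding lin_phase_def by (rule lin_dev_telescope) (use U'pos in force)
    moreover have "arr_shift i 0 = arr_shift i 1" by (simp add: arr_shift_def)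
    ultimately show ?thesis by simp
  qed
  also have "\<dots> = lin_phase i ?k + arr_shift i ?k" using ref_phase_last[OF i] alpha_pos by simp
  finally show ?thesis .
qed

theorem period_map_estimate:
  assumes i: "i \<in> {1..N}"
  shows "\<bar>(phases_at U I N Pre eps tau (init_state theta delta) (tau + 1 - the_inv_into I U (U tau + epsilon)) i - theta)
    - (\<Sum>l\<in>{1..N}. stabA U U' I Pre eps epsilon tau Ord i l * delta l)\<bar> \<le> rem_bound N * (dnorm N delta)\<^sup>2"
proof -
  let ?k = "card (Pre i)"
  have "phases_at U I N Pre eps tau (init_state theta delta) Tend i = S.psi i ?k + Tend - S.arrival i ?k"
    using regular_schedule.phases_at_end[OF schedule_regular i] .
  then have "phases_at U I N Pre eps tau (init_state theta delta) Tend i - theta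
      - (\<Sum>l\<in>{1..N}. stabA U U' I Pre eps epsilon tau Ord i l * delta l)
      = S.psi i ?k - ref_phase i ?k - lin_phase i ?k"
    using stabA_row_eq[OF i] ref_phase_last[OF i] unfolding Tend_def arrival_eq by simp
  moreover have "\<bar>S.psi i ?k - ref_phase i ?k - lin_phase i ?k\<bar> \<le> rem_bound N * dsize\<^sup>2"
    using psi_close(2)[OF i order_refl] rem_bound_mono[OF card_Pre_le[OF i]]
    by (meson mult_right_mono order_trans zero_le_power2)
  ultimately show ?thesis unfolding Tend_def alpha_def dsize_def by simp
qed

end

text \<open>Uniform margins around finitely many unperturbed phases: since \<open>I\<close> is open, some
  \<open>2 rho\<close>-neighbourhood of all phases \<open>U\<^sup>-\<^sup>1 d\<close>, \<open>d \<in> D\<close>, lies in a compact interval \<open>[a, b] \<subseteq> I\<close>;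
  and since all \<open>d < 1 = U 1\<close>, these phases and inputs stay uniformly below 1.\<close>
lemma finite_margins:
  fixes U :: "real \<Rightarrow> real"
  assumes Iopen: "open I" and Iint: "is_interval I" and mono: "strict_mono_on I U"
    and one: "1 \<in> I" and U1: "U 1 = 1"
    and finD: "finite D" and neD: "D \<noteq> {}" and DI: "D \<subseteq> U ` I" and Dl1: "\<And>d. d \<in> D \<Longrightarrow> d < 1"
  obtains a b rho beta ymax :: real
  where "a \<le> b" "{a..b} \<subseteq> I" "0 < rho" "0 < beta" "ymax < 1"
    "\<And>d. d \<in> D \<Longrightarrow> the_inv_into I U d - 2 * rho \<in> {a..b} \<and> the_inv_into I U d + 2 * rho \<in> {a..b}
        \<and> the_inv_into I U d \<le> ymax \<and> d \<le> 1 - beta"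
proof -
  have inj: "inj_on U I" using strict_mono_on_imp_inj_on[OF mono] .
  have inv: "the_inv_into I U d \<in> I \<and> U (the_inv_into I U d) = d" if "d \<in> D" for d
    using that DI inj by (auto simp: the_inv_into_into f_the_inv_into_f)
  define Y where "Y = the_inv_into I U ` D"
  have finY: "finite Y" and neY: "Y \<noteq> {}" using finD neD unfolding Y_def by auto
  define ylo where "ylo = Min Y"
  define yhi where "yhi = Max Y"
  have ylo: "ylo \<in> Y" and yhi: "yhi \<in> Y" using Min_in[OF finY neY] Max_in[OF finY neY] ylo_def yhi_def by auto
  then have yloI: "ylo \<in> I" and yhiI: "yhi \<in> I" using inv unfolding Y_def by auto
  obtain e1 where e1: "0 < e1" "ball ylo e1 \<subseteq> I" using Iopen yloI open_contains_ball by blast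
  obtain e2 where e2: "0 < e2" "ball yhi e2 \<subseteq> I" using Iopen yhiI open_contains_ball by blast
  define rho where "rho = min e1 e2 / 4"
  have rho: "0 < rho" using e1 e2 by (simp add: rho_def)
  define a where "a = ylo - 2 * rho"
  define b where "b = yhi + 2 * rho"
  have "a \<in> ball ylo e1" using rho e1 by (simp add: a_def dist_real_def rho_def)
  then have aI: "a \<in> I" using e1(2) by (rule subsetD[rotated])
  have "b \<in> ball yhi e2" using rho e2 by (simp add: b_def dist_real_def rho_def)
  then have bI: "b \<in> I" using e2(2) by (rule subsetD[rotated])
  have KI: "{a..b} \<subseteq> I" using mem_is_interval_1_I[OF Iint aI bI] by auto
  have ab: "a \<le> b" using Min_le[OF finY yhi] rho by (simp add: a_def b_def ylo_def yhi_def)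
  have yhi1: "yhi < 1"
  proof (rule ccontr)
    obtain d where d: "d \<in> D" "yhi = the_inv_into I U d" using yhi unfolding Y_def by blast
    assume "\<not> yhi < 1"
    then have "U 1 \<le> U yhi" using strict_mono_on_leD[OF mono one yhiI] by simp
    then show False using inv[OF d(1)] d(2) Dl1[OF d(1)] U1 by simp
  qed
  define beta where "beta = 1 - Max D"
  have beta: "0 < beta" using Dl1 Max_in[OF finD neD] by (simp add: beta_def)
  show ?thesis
  proof (rule that[OF ab KI rho beta yhi1])
    fix d assume d: "d \<in> D"
    have "the_inv_into I U d \<in> Y" using d unfolding Y_def by blast
    then have "ylo \<le> the_inv_into I U d" "the_inv_into I U d \<le> yhi"
      using finY unfolding ylo_def yhi_def by auto
    moreover have "d \<le> Max D" using d finD by simp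
    ultimately show "the_inv_into I U d - 2 * rho \<in> {a..b} \<and> the_inv_into I U d + 2 * rho \<in> {a..b}
        \<and> the_inv_into I U d \<le> yhi \<and> d \<le> 1 - beta"
      using rho unfolding a_def b_def beta_def by auto
  qed
qed

lemma derivative_bounds:
  fixes U' U'' :: "real \<Rightarrow> real"
  assumes KI: "{a..b} \<subseteq> I" and ab: "a \<le> b"
    and U'_deriv: "\<And>x. x \<in> I \<Longrightarrow> (U' has_real_derivative U'' x) (at x)"
    and U''_cont: "continuous_on I U''" and U'_pos: "\<And>x. x \<in> I \<Longrightarrow> 0 < U' x"
  obtains m0 M1 M2 where "0 < m0" "\<And>x. x \<in> {a..b} \<Longrightarrow> m0 \<le> U' x \<and> U' x \<le> M1 \<and> \<bar>U'' x\<bar> \<le> M2"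
proof -
  have contU': "continuous_on {a..b} U'"
  proof (rule DERIV_continuous_on)
    fix x assume "x \<in> {a..b}"
    then show "(U' has_real_derivative U'' x) (at x within {a..b})"
      using U'_deriv KI has_field_derivative_at_within by blast
  qed
  have contU'': "continuous_on {a..b} (\<lambda>x. \<bar>U'' x\<bar>)"
    using continuous_on_subset[OF U''_cont KI] by (intro continuous_intros)
  have cpt: "compact {a..b}" and ne: "{a..b} \<noteq> {}" using ab by auto
  obtain x0 where x0: "x0 \<in> {a..b}" "\<forall>y\<in>{a..b}. U' x0 \<le> U' y"
    using continuous_attains_inf[OF cpt ne contU'] by blast
  obtain x1 where "\<forall>y\<in>{a..b}. U' y \<le> U' x1"
    using continuous_attains_sup[OF cpt ne contU'] by blast
  moreover obtain x2 where "\<forall>y\<in>{a..b}. \<bar>U'' y\<bar> \<le> \<bar>U'' x2\<bar>"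
    using continuous_attains_sup[OF cpt ne contU''] by blast
  moreover have "0 < U' x0" using U'_pos x0(1) KI by auto
  ultimately show ?thesis using that[of "U' x0" "U' x1" "\<bar>U'' x2\<bar>"] x0 by blast
qed

lemma eventually_linear_small:
  fixes c d :: real
  assumes "0 < d"
  shows "\<forall>\<^sub>F e in nhds 0. c * e < d"
proof -
  have "open {e :: real. c * e < d}" by (intro open_Collect_less continuous_intros)
  then show ?thesis using assms unfolding eventually_nhds by (intro exI[of _ "{e. c * e < d}"]) auto
qed

lemma dnorm_nonneg: "1 \<le> N \<Longrightarrow> 0 \<le> dnorm N delta"
  unfolding dnorm_def by (rule order_trans[OF abs_ge_zero Max_ge[of _ "\<bar>delta 1\<bar>"]]) auto

lemma network_margins:
  fixes U :: "real \<Rightarrow> real" and N :: nat and Pre :: "nat \<Rightarrow> nat set" and eps :: "nat \<Rightarrow> nat \<Rightarrow> real"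
  assumes Iopen: "open I" and Iint: "is_interval I" and mono: "strict_mono_on I U"
    and one: "1 \<in> I" and U1: "U 1 = 1" and N1: "1 \<le> N"
    and Pre_sub: "\<And>i. i \<in> {1..N} \<Longrightarrow> Pre i \<subseteq> {1..N}"
    and in_range: "\<And>i S. i \<in> {1..N} \<Longrightarrow> S \<subseteq> Pre i \<Longrightarrow> U tau + (\<Sum>j\<in>S. eps i j) \<in> U ` I"
    and sub_partial: "\<And>i S. i \<in> {1..N} \<Longrightarrow> S \<subseteq> Pre i \<Longrightarrow> U tau + (\<Sum>j\<in>S. eps i j) < 1"
  obtains a b rho beta ymax :: real
  where "a \<le> b" "{a..b} \<subseteq> I" "0 < rho" "0 < beta" "ymax < 1"
    "\<And>i S. i \<in> {1..N} \<Longrightarrow> S \<subseteq> Pre i \<Longrightarrow>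
        the_inv_into I U (U tau + (\<Sum>j\<in>S. eps i j)) - 2 * rho \<in> {a..b} \<and>
        the_inv_into I U (U tau + (\<Sum>j\<in>S. eps i j)) + 2 * rho \<in> {a..b} \<and>
        the_inv_into I U (U tau + (\<Sum>j\<in>S. eps i j)) \<le> ymax \<and> U tau + (\<Sum>j\<in>S. eps i j) \<le> 1 - beta"
proof -
  define D where "D = (\<Union>i\<in>{1..N}. (\<lambda>S. U tau + (\<Sum>j\<in>S. eps i j)) ` Pow (Pre i))"
  have "finite (Pre i)" if "i \<in> {1..N}" for i using Pre_sub[OF that] finite_subset by blast
  then have finD: "finite D" unfolding D_def by auto
  have neD: "D \<noteq> {}" unfolding D_def using N1 by auto
  have DI: "D \<subseteq> U ` I" unfolding D_def using in_range by auto
  have Dl1: "d < 1" if d: "d \<in> D" for d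
  proof -
    obtain i S where "i \<in> {1..N}" "S \<subseteq> Pre i" "d = U tau + (\<Sum>j\<in>S. eps i j)"
      using d unfolding D_def by blast
    then show ?thesis using sub_partial by simp
  qed
  obtain a b rho beta ymax where bounds: "a \<le> b" "{a..b} \<subseteq> I" "0 < rho" "0 < beta" "ymax < 1"
    and margins: "\<And>d. d \<in> D \<Longrightarrow> the_inv_into I U d - 2 * rho \<in> {a..b} \<and> the_inv_into I U d + 2 * rho \<in> {a..b}
        \<and> the_inv_into I U d \<le> ymax \<and> d \<le> 1 - beta"
    using finite_margins[OF Iopen Iint mono one U1 finD neD DI Dl1] by blast
  show ?thesis
  proof (rule that[OF bounds])
    fix i S assume "i \<in> {1..N}" "S \<subseteq> Pre i"
    then have "U tau + (\<Sum>j\<in>S. eps i j) \<in> D" unfolding D_def by blast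
    then show "the_inv_into I U (U tau + (\<Sum>j\<in>S. eps i j)) - 2 * rho \<in> {a..b} \<and>
        the_inv_into I U (U tau + (\<Sum>j\<in>S. eps i j)) + 2 * rho \<in> {a..b} \<and>
        the_inv_into I U (U tau + (\<Sum>j\<in>S. eps i j)) \<le> ymax \<and> U tau + (\<Sum>j\<in>S. eps i j) \<le> 1 - beta"
      by (rule margins)
  qed
qed

lemma (in U_bounds) uniform_period_estimate:
  fixes N :: nat and Pre :: "nat \<Rightarrow> nat set" and eps :: "nat \<Rightarrow> nat \<Rightarrow> real"
    and epsilon tau theta ymax beta rho :: real
  assumes N1: "1 \<le> N"
    and Pre_sub: "\<And>i. i \<in> {1..N} \<Longrightarrow> Pre i \<subseteq> {1..N} - {i}"
    and Pre_ne: "\<And>i. i \<in> {1..N} \<Longrightarrow> Pre i \<noteq> {}"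
    and eps_Pre: "\<And>i. i \<in> {1..N} \<Longrightarrow> (\<Sum>j\<in>Pre i. eps i j) = epsilon"
    and tau: "0 < tau" "tau < 1" "tau \<in> I"
    and in_range: "\<And>i S. i \<in> {1..N} \<Longrightarrow> S \<subseteq> Pre i \<Longrightarrow> U tau + (\<Sum>j\<in>S. eps i j) \<in> U ` I"
    and pos: "0 < rho" "0 < beta" "ymax < 1"
    and margins: "\<And>i S. i \<in> {1..N} \<Longrightarrow> S \<subseteq> Pre i \<Longrightarrow>
        the_inv_into I U (U tau + (\<Sum>j\<in>S. eps i j)) - 2 * rho \<in> {a..b} \<and>
        the_inv_into I U (U tau + (\<Sum>j\<in>S. eps i j)) + 2 * rho \<in> {a..b} \<and>
        the_inv_into I U (U tau + (\<Sum>j\<in>S. eps i j)) \<le> ymax \<and> U tau + (\<Sum>j\<in>S. eps i j) \<le> 1 - beta"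
    and theta: "the_inv_into I U (U tau + epsilon) < theta" "theta < 1"
  shows "\<exists>C>0. \<exists>r>0. \<forall>delta :: nat \<Rightarrow> real. \<forall>Ord :: nat \<Rightarrow> nat \<Rightarrow> nat.
           dnorm N delta < r
         \<and> (\<forall>i\<in>{1..N}. \<forall>j\<in>{1..N}. delta i - delta j < tau)
         \<and> (\<forall>i\<in>{1..N}. bij_betw (Ord i) {1..card (Pre i)} (Pre i)
               \<and> (\<forall>n m. 1 \<le> n \<longrightarrow> n \<le> m \<longrightarrow> m \<le> card (Pre i) \<longrightarrow> delta (Ord i m) \<le> delta (Ord i n)))
         \<longrightarrow> (\<forall>i\<in>{1..N}.
               \<bar>(phases_at U I N Pre eps tau (init_state theta delta)
                   (tau + 1 - the_inv_into I U (U tau + epsilon)) i - theta)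
                - (\<Sum>l\<in>{1..N}. stabA U U' I Pre eps epsilon tau Ord i l * delta l)\<bar>
               \<le> C * (dnorm N delta)\<^sup>2)"
proof -
  define s where "s = dev_bound N + 2"
  have "\<forall>\<^sub>F e in nhds 0. s * e < rho \<and> (M1 * s) * e < m0 * rho \<and> (M1 * s) * e < beta
      \<and> s * e < 1 - ymax \<and> s * e < 1 - theta \<and> 1 * e < theta - the_inv_into I U (U tau + epsilon)
      \<and> 2 * e < 1 - tau"
    using pos m0 theta tau by (intro eventually_conj eventually_linear_small) simp_all
  then obtain r where r: "0 < r" and small: "\<And>e. \<bar>e\<bar> < r \<Longrightarrow> s * e < rho \<and> (M1 * s) * e < m0 * rho
      \<and> (M1 * s) * e < beta \<and> s * e < 1 - ymax \<and> s * e < 1 - theta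
      \<and> 1 * e < theta - the_inv_into I U (U tau + epsilon) \<and> 2 * e < 1 - tau"
    unfolding eventually_nhds_metric dist_real_def by auto
  have network: "perturbed_network U U' U'' I a b m0 M1 M2 N Pre eps epsilon tau theta ymax beta rho delta Ord"
    if H: "dnorm N delta < r \<and> (\<forall>i\<in>{1..N}. \<forall>j\<in>{1..N}. delta i - delta j < tau)
      \<and> (\<forall>i\<in>{1..N}. bij_betw (Ord i) {1..card (Pre i)} (Pre i)
          \<and> (\<forall>n m. 1 \<le> n \<longrightarrow> n \<le> m \<longrightarrow> m \<le> card (Pre i) \<longrightarrow> delta (Ord i m) \<le> delta (Ord i n)))"
    for delta Ord
  proof (rule perturbed_network.intro[OF U_bounds_axioms], rule perturbed_network_axioms.intro)
    have "\<bar>dnorm N delta\<bar> < r" using H dnorm_nonneg[OF N1, of delta] by simp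
    note sm = small[OF this, unfolded s_def]
    show "(dev_bound N + 2) * dnorm N delta \<le> rho"
      "M1 * ((dev_bound N + 2) * dnorm N delta) < m0 * rho"
      "M1 * ((dev_bound N + 2) * dnorm N delta) < beta"
      "ymax + (dev_bound N + 2) * dnorm N delta < 1"
      "theta + (dev_bound N + 2) * dnorm N delta < 1"
      "dnorm N delta < theta - the_inv_into I U (U tau + epsilon)"
      "2 * dnorm N delta < 1 - tau"
      using sm by (simp_all add: mult.assoc less_diff_eq add.commute)
    show "\<And>i j. i \<in> {1..N} \<Longrightarrow> j \<in> {1..N} \<Longrightarrow> delta i - delta j < tau"
      "\<And>i. i \<in> {1..N} \<Longrightarrow> bij_betw (Ord i) {1..card (Pre i)} (Pre i)"
      "\<And>i n m. i \<in> {1..N} \<Longrightarrow> 1 \<le> n \<Longrightarrow> n \<le> m \<Longrightarrow> m \<le> card (Pre i) \<Longrightarrow> delta (Ord i m) \<le> delta (Ord i n)"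
      using H by blast+
  qed (use N1 Pre_sub Pre_ne eps_Pre tau in_range pos margins in auto)
  have "\<forall>i\<in>{1..N}.
      \<bar>(phases_at U I N Pre eps tau (init_state theta delta) (tau + 1 - the_inv_into I U (U tau + epsilon)) i - theta)
        - (\<Sum>l\<in>{1..N}. stabA U U' I Pre eps epsilon tau Ord i l * delta l)\<bar>
      \<le> (rem_bound N + 1) * (dnorm N delta)\<^sup>2"
    if H: "dnorm N delta < r \<and> (\<forall>i\<in>{1..N}. \<forall>j\<in>{1..N}. delta i - delta j < tau)
      \<and> (\<forall>i\<in>{1..N}. bij_betw (Ord i) {1..card (Pre i)} (Pre i)
          \<and> (\<forall>n m. 1 \<le> n \<longrightarrow> n \<le> m \<longrightarrow> m \<le> card (Pre i) \<longrightarrow> delta (Ord i m) \<le> delta (Ord i n)))"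
    for delta Ord
    using perturbed_network.period_map_estimate[OF network[OF H]]
      mult_right_mono[of "rem_bound N" "rem_bound N + 1" "(dnorm N delta)\<^sup>2"] by fastforce
  moreover have "0 < rem_bound N + 1" using rem_bound_nonneg[of N] by simp
  ultimately show ?thesis using r by blast
qed

theorem mainTheorem9:
  fixes U U' U'' :: "real \<Rightarrow> real" and I :: "real set"
    and N :: nat and Pre :: "nat \<Rightarrow> nat set" and eps :: "nat \<Rightarrow> nat \<Rightarrow> real"
    and epsilon tau theta :: real
  assumes I_interval: "is_interval I" and I_open: "open I" and I01: "{0..1} \<subseteq> I"
    and U_deriv: "\<And>x. x \<in> I \<Longrightarrow> (U has_real_derivative U' x) (at x)"
    and U'_deriv: "\<And>x. x \<in> I \<Longrightarrow> (U' has_real_derivative U'' x) (at x)"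
    and U''_cont: "continuous_on I U''"
    and U'_pos: "\<And>x. x \<in> I \<Longrightarrow> U' x > 0"
    and U''_neg: "\<And>x. x \<in> I \<Longrightarrow> U'' x < 0"
    and U0: "U 0 = 0" and U1: "U 1 = 1"
    and Pre_sub: "\<And>i. i \<in> {1..N} \<Longrightarrow> Pre i \<subseteq> {1..N} - {i}"
    and Pre_ne: "\<And>i. i \<in> {1..N} \<Longrightarrow> Pre i \<noteq> {}"
    and eps_nz: "\<And>i j. i \<in> {1..N} \<Longrightarrow> j \<in> {1..N} \<Longrightarrow> (eps i j \<noteq> 0 \<longleftrightarrow> j \<in> Pre i)"
    and eps_sum: "\<And>i. i \<in> {1..N} \<Longrightarrow> (\<Sum>j\<in>{1..N}. eps i j) = epsilon"
    and tau: "0 < tau" "tau < 1"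
    and sub_total: "U tau + epsilon < 1"
    and sub_partial: "\<And>i S. i \<in> {1..N} \<Longrightarrow> S \<subseteq> Pre i \<Longrightarrow> U tau + (\<Sum>j\<in>S. eps i j) < 1"
    and in_range: "\<And>i S. i \<in> {1..N} \<Longrightarrow> S \<subseteq> Pre i \<Longrightarrow> U tau + (\<Sum>j\<in>S. eps i j) \<in> U ` I"
    and theta: "the_inv_into I U (U tau + epsilon) < theta" "theta < 1"
  shows "\<exists>C>0. \<exists>r>0. \<forall>delta :: nat \<Rightarrow> real. \<forall>Ord :: nat \<Rightarrow> nat \<Rightarrow> nat.
           dnorm N delta < r
         \<and> (\<forall>i\<in>{1..N}. \<forall>j\<in>{1..N}. delta i - delta j < tau)
         \<and> (\<forall>i\<in>{1..N}. bij_betw (Ord i) {1..card (Pre i)} (Pre i)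
               \<and> (\<forall>n m. 1 \<le> n \<longrightarrow> n \<le> m \<longrightarrow> m \<le> card (Pre i) \<longrightarrow> delta (Ord i m) \<le> delta (Ord i n)))
         \<longrightarrow> (\<forall>i\<in>{1..N}.
               \<bar>(phases_at U I N Pre eps tau (init_state theta delta)
                   (tau + 1 - the_inv_into I U (U tau + epsilon)) i - theta)
                - (\<Sum>l\<in>{1..N}. stabA U U' I Pre eps epsilon tau Ord i l * delta l)\<bar>
               \<le> C * (dnorm N delta)\<^sup>2)"
proof (cases "N = 0")
  case True
  show ?thesis by (rule exI[of _ 1], simp, rule exI[of _ 1]) (simp add: True)
next
  case False
  then have N1: "1 \<le> N" by simp
  have mono: "strict_mono_on I U" using strict_mono_on_pos_deriv[OF I_interval U_deriv U'_pos] .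
  have eps_Pre: "(\<Sum>j\<in>Pre i. eps i j) = epsilon" if i: "i \<in> {1..N}" for i
  proof -
    have "(\<Sum>j\<in>Pre i. eps i j) = (\<Sum>j\<in>{1..N}. eps i j)"
      by (rule sum.mono_neutral_left) (use Pre_sub[OF i] eps_nz[OF i] in blast)+
    then show ?thesis using eps_sum[OF i] by simp
  qed
  have one: "1 \<in> I" using I01 by auto
  have Pre_units: "\<And>i. i \<in> {1..N} \<Longrightarrow> Pre i \<subseteq> {1..N}" using Pre_sub by blast
  obtain a b rho beta ymax where ab: "a \<le> b" "{a..b} \<subseteq> I" and margins: "0 < rho" "0 < beta" "ymax < 1"
    "\<And>i S. i \<in> {1..N} \<Longrightarrow> S \<subseteq> Pre i \<Longrightarrow>
        the_inv_into I U (U tau + (\<Sum>j\<in>S. eps i j)) - 2 * rho \<in> {a..b} \<and>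
        the_inv_into I U (U tau + (\<Sum>j\<in>S. eps i j)) + 2 * rho \<in> {a..b} \<and>
        the_inv_into I U (U tau + (\<Sum>j\<in>S. eps i j)) \<le> ymax \<and> U tau + (\<Sum>j\<in>S. eps i j) \<le> 1 - beta"
    using network_margins[where N = N and Pre = Pre and eps = eps and tau = tau,
        OF I_open I_interval mono one U1 N1 Pre_units in_range sub_partial] by blast
  obtain m0 M1 M2 where m0: "0 < m0" and bnds: "\<And>x. x \<in> {a..b} \<Longrightarrow> m0 \<le> U' x \<and> U' x \<le> M1 \<and> \<bar>U'' x\<bar> \<le> M2"
    using derivative_bounds[OF ab(2,1) U'_deriv U''_cont U'_pos] by blast
  interpret K: U_bounds U U' U'' I a b m0 M1 M2
    by (rule U_bounds.intro[OF U_deriv U'_deriv I_interval U'_pos ab(2,1) m0 bnds])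
  have "tau \<in> I" using I01 tau by auto
  show ?thesis by (rule K.uniform_period_estimate[OF N1 Pre_sub Pre_ne eps_Pre tau \<open>tau \<in> I\<close> in_range margins theta])
qed

end
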